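(* Let $\beta\in(0,n)$ and $1\le p<n/\beta$. Then for all $f\in C_0^\infty(\mathbb{R}^n)$, $$\left(\int_{\mathbb{R}^n}|f(x)|^{\frac{np}{n-p\beta}}dx\right)^{\frac{n-p\beta}{np}}\lesssim\left(\int_0^\infty V(O_t(f))^{\frac{n-p\beta}{n}}\,d(t^p)\right)^{1/p}\lesssim\|f\|_{\dot{\Lambda}^{p,p}_\beta(\mathbb{R}^n)},$$ with implicit constants independent of $f$.
   Context: $C_0^\infty(\mathbb{R}^n)$ is the space of compactly supported smooth functions, $V$ is Lebesgue measure, and $O_t(f)=\{x:|f(x)|>t\}$. Besov norm: let $k=1+\lfloor\beta\rfloor$, $\Delta^1_h f(x)=f(x+h)-f(x)$ and $\Delta^k_h=\Delta^1_h\Delta^{k-1}_h$. Then $$\|f\|_{\dot{\Lambda}^{p,p}_\beta(\mathbb{R}^n)}=\left(\int_{\mathbb{R}^n}\|\Delta^k_h f\|_{L^p}^p|h|^{-(n+\beta p)}dh\right)^{1/p}.$$ *)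

theory Defs
  imports "HOL-Analysis.Analysis"
begin

fun Ck :: "nat \<Rightarrow> ('a::euclidean_space \<Rightarrow> real) \<Rightarrow> bool" where
  "Ck 0 f = continuous_on UNIV f"
| "Ck (Suc k) f = ((\<forall>x. f differentiable (at x)) \<and>
      (\<forall>v. Ck k (\<lambda>x. frechet_derivative f (at x) v)))"


definition C0_inf :: "('a::euclidean_space \<Rightarrow> real) \<Rightarrow> bool" where
  "C0_inf f \<longleftrightarrow> (\<forall>k. Ck k f) \<and> compact (closure {x. f x \<noteq> 0})"


definition level_set :: "('a \<Rightarrow> real) \<Rightarrow> real \<Rightarrow> 'a set" where
  "level_set f t = {x. \<bar>f x\<bar> > t}"


fun fdiff :: "nat \<Rightarrow> 'a::real_vector \<Rightarrow> ('a \<Rightarrow> real) \<Rightarrow> 'a \<Rightarrow> real" where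
  "fdiff 0 h f x = f x"
| "fdiff (Suc k) h f x = fdiff k h f (x + h) - fdiff k h f x"


definition besov_norm :: "real \<Rightarrow> real \<Rightarrow> ('a::euclidean_space \<Rightarrow> real) \<Rightarrow> real" where
  "besov_norm \<beta> p f =
     (enn2real (\<integral>\<^sup>+ h. ((\<integral>\<^sup>+ x. ennreal (\<bar>fdiff (nat (1 + \<lfloor>\<beta>\<rfloor>)) h f x\<bar> powr p) \<partial>lborel)
         * ennreal (norm h powr (- (real DIM('a) + \<beta> * p)))) \<partial>lborel)) powr (1 / p)"

end

theory Submission
  imports Defs
begin

text \<open>
  Let \<open>k = \<lfloor>\<beta>\<rfloor> + 1\<close>, \<open>\<gamma> = \<beta> p / n\<close>, and discretise the heights geometrically:
  \<open>s\<^sub>i = T / \<lambda>\<^sup>i\<close> with \<open>T \<ge> sup |f|\<close>, and \<open>a\<^sub>i = V(O(s\<^sub>i))\<close>.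
  Both the \<open>L\<^sup>q\<close> norm, \<open>q = np / (n - p\<beta>)\<close>, and the level-set integral are comparable to
  \<open>X = \<Sum> s\<^sub>i\<^sup>p a\<^sub>i\<^sup>1\<^sup>-\<^sup>\<gamma>\<close>: the level-set integral by comparing \<open>t\<close> with the endpoints of
  \<open>(s\<^sub>i\<^sub>+\<^sub>1, s\<^sub>i]\<close>, the \<open>L\<^sup>q\<close> norm because \<open>q / p \<ge> 1\<close>, so that \<open>\<Sum> x\<^sub>i\<^sup>q\<^sup>/\<^sup>p \<le> (\<Sum> x\<^sub>i)\<^sup>q\<^sup>/\<^sup>p\<close>.
  Since \<open>a\<close> increases, \<open>X\<close> is absorbed into the mixed sum \<open>U = \<Sum> s\<^sub>i\<^sub>+\<^sub>1\<^sup>p a\<^sub>i a\<^sub>i\<^sub>+\<^sub>1\<^sup>-\<^sup>\<gamma>\<close>.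
  Finally, with \<open>\<lambda> = 2\<^sup>k\<^sup>+\<^sup>1\<close>: if \<open>|f x| > s\<^sub>m\<^sub>+\<^sub>1\<close>, then for all \<open>h\<close> in the ball of volume
  \<open>2 k a\<^sub>m\<^sub>+\<^sub>2\<close> except a set of volume \<open>k a\<^sub>m\<^sub>+\<^sub>2\<close> none of the points \<open>x + j h\<close>, \<open>1 \<le> j \<le> k\<close>, lies
  in \<open>O(s\<^sub>m\<^sub>+\<^sub>2)\<close>, hence \<open>|\<Delta>\<^sup>k\<^sub>h f x| \<ge> s\<^sub>m\<^sub>+\<^sub>1 / 2\<close>. This bounds the inner Besov integral at \<open>x\<close>
  from below by a multiple of \<open>s\<^sub>m\<^sub>+\<^sub>1\<^sup>p a\<^sub>m\<^sub>+\<^sub>2\<^sup>-\<^sup>\<gamma>\<close>, and integrating over \<open>x\<close> bounds \<open>U\<close>.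
  The Besov integral of a smooth compactly supported function is finite
  (\<open>\<Delta>\<^sup>k\<^sub>h f = O(|h|\<^sup>k)\<close> near \<open>0\<close> and bounded elsewhere), so the real-valued norms are meaningful.
\<close>

section \<open>Finite differences\<close>

lemma fdiff_abs_le:
  fixes f :: "'a::real_vector \<Rightarrow> real"
  assumes "\<And>j. j \<le> k \<Longrightarrow> \<bar>f (y + of_nat j *\<^sub>R h)\<bar> \<le> e"
  shows "\<bar>fdiff k h f y\<bar> \<le> 2 ^ k * e"
  using assms
proof (induction k arbitrary: y)
  case (Suc k)
  have "\<bar>fdiff k h f (y + h)\<bar> \<le> 2 ^ k * e"
    using Suc.prems[of "Suc _"] by (intro Suc.IH) (auto simp: algebra_simps)
  moreover have "\<bar>fdiff k h f y\<bar> \<le> 2 ^ k * e"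
    using Suc.prems by (intro Suc.IH) auto
  ultimately show ?case by simp
qed simp

lemma fdiff_nonzero_imp:
  fixes f :: "'a::real_vector \<Rightarrow> real"
  assumes "fdiff k h f y \<noteq> 0"
  shows "\<exists>j\<le>k. f (y + of_nat j *\<^sub>R h) \<noteq> 0"
proof (rule ccontr)
  assume "\<not> ?thesis"
  then have "\<bar>fdiff k h f y\<bar> \<le> 2 ^ k * 0" by (intro fdiff_abs_le) auto
  with assms show False by simp
qed

lemma abs_fdiff_minus_leading_term_le:
  fixes f :: "'a::real_vector \<Rightarrow> real"
  assumes "\<And>j. 1 \<le> j \<Longrightarrow> j \<le> k \<Longrightarrow> \<bar>f (x + of_nat j *\<^sub>R h)\<bar> \<le> e"
  shows "\<bar>fdiff k h f x - (-1) ^ k * f x\<bar> \<le> (2 ^ k - 1) * e"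
  using assms
proof (induction k)
  case (Suc k)
  have "\<bar>fdiff k h f (x + h)\<bar> \<le> 2 ^ k * e"
    using Suc.prems[of "Suc _"] by (intro fdiff_abs_le) (auto simp: algebra_simps)
  moreover have "\<bar>fdiff k h f x - (-1) ^ k * f x\<bar> \<le> (2 ^ k - 1) * e"
    using Suc.prems by (intro Suc.IH) auto
  ultimately have "\<bar>fdiff k h f (x + h) - (fdiff k h f x - (-1) ^ k * f x)\<bar> \<le> 2 ^ k * e + (2 ^ k - 1) * e"
    by (smt (verit) abs_triangle_ineq4)
  then show ?case by (simp add: algebra_simps)
qed simp

lemma fdiff_abs_ge_half:
  fixes f :: "'a::real_vector \<Rightarrow> real"
  assumes "s < \<bar>f x\<bar>" and "2 ^ k * e \<le> s / 2" and "0 \<le> e"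
    and "\<And>j. 1 \<le> j \<Longrightarrow> j \<le> k \<Longrightarrow> \<bar>f (x + of_nat j *\<^sub>R h)\<bar> \<le> e"
  shows "s / 2 \<le> \<bar>fdiff k h f x\<bar>"
proof -
  have "\<bar>fdiff k h f x - (-1) ^ k * f x\<bar> \<le> (2 ^ k - 1) * e"
    by (rule abs_fdiff_minus_leading_term_le) (use assms(4) in auto)
  moreover have "\<bar>(-1) ^ k * f x\<bar> = \<bar>f x\<bar>" by (simp add: abs_mult)
  ultimately show ?thesis using assms(1-3) by (simp add: algebra_simps abs_le_iff)
qed

lemma fdiff_cmult:
  fixes g :: "'a::real_vector \<Rightarrow> real"
  shows "fdiff k h (\<lambda>y. c * g y) x = c * fdiff k h g x"
  by (induction k arbitrary: x) (auto simp: right_diff_distrib)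

lemma fdiff_sum:
  fixes g :: "'b \<Rightarrow> 'a::real_vector \<Rightarrow> real"
  shows "fdiff k h (\<lambda>y. \<Sum>i\<in>I. c i * g i y) x = (\<Sum>i\<in>I. c i * fdiff k h (g i) x)"
  by (induction k arbitrary: x) (auto simp: sum_subtractf[symmetric] right_diff_distrib)

lemma continuous_on_fdiff:
  fixes f :: "'a::real_normed_vector \<Rightarrow> real"
  assumes "continuous_on UNIV f"
  shows "continuous_on UNIV (\<lambda>z. fdiff k (fst z) f (snd z))"
proof (induction k)
  case 0
  then show ?case by (auto intro!: continuous_on_compose2[OF assms] continuous_intros)
next
  case (Suc k)
  have "continuous_on UNIV ((\<lambda>z. fdiff k (fst z) f (snd z)) \<circ> (\<lambda>z. (fst z, snd z + fst z)))"
    by (rule continuous_on_compose) (auto intro!: continuous_intros continuous_on_subset[OF Suc.IH])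
  then show ?case using Suc.IH by (auto simp: o_def intro!: continuous_intros)
qed

lemma borel_measurable_fdiff:
  fixes f :: "'a::euclidean_space \<Rightarrow> real"
  assumes "continuous_on UNIV f"
  shows "fdiff k h f \<in> borel_measurable borel"
proof -
  have "continuous_on UNIV ((\<lambda>z. fdiff k (fst z) f (snd z)) \<circ> Pair h)"
    by (rule continuous_on_compose)
       (auto intro!: continuous_intros continuous_on_subset[OF continuous_on_fdiff[OF assms]])
  then show ?thesis by (auto simp: o_def intro: borel_measurable_continuous_onI)
qed

lemma fdiff_has_derivative:
  fixes f :: "'a::real_normed_vector \<Rightarrow> real"
  assumes "\<And>x. f differentiable (at x)"
  shows "(fdiff k h f has_derivative (\<lambda>v. fdiff k h (\<lambda>y. frechet_derivative f (at y) v) x)) (at x)"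
proof (induction k arbitrary: x)
  case 0
  then show ?case using assms[of x] by (simp add: frechet_derivative_works)
next
  case (Suc k)
  have "((fdiff k h f \<circ> (\<lambda>y. y + h)) has_derivative
          ((\<lambda>v. fdiff k h (\<lambda>y. frechet_derivative f (at y) v) (x + h)) \<circ> (\<lambda>v. v))) (at x)"
    by (rule diff_chain_at[OF _ Suc.IH]) (auto intro!: derivative_eq_intros)
  then have "((\<lambda>y. fdiff k h f (y + h)) has_derivative
          (\<lambda>v. fdiff k h (\<lambda>y. frechet_derivative f (at y) v) (x + h))) (at x)"
    by (simp add: o_def)
  from has_derivative_diff[OF this Suc.IH[of x]] show ?case by simp
qed

lemma fdiff_Suc_mean_value:
  fixes f :: "'a::real_normed_vector \<Rightarrow> real"
  assumes "\<And>x. f differentiable (at x)"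
  obtains z where "fdiff (Suc k) h f x = fdiff k h (\<lambda>y. frechet_derivative f (at y) h) (x + z *\<^sub>R h)"
proof -
  define \<phi> where "\<phi> s = fdiff k h f (x + s *\<^sub>R h)" for s :: real
  define \<phi>' where "\<phi>' s = fdiff k h (\<lambda>y. frechet_derivative f (at y) h) (x + s *\<^sub>R h)" for s :: real
  have lin: "linear (frechet_derivative f (at y))" for y
    using assms[of y] by (simp add: frechet_derivative_works has_derivative_linear)
  have "(\<phi> has_real_derivative \<phi>' s) (at s)" for s
  proof -
    have "((fdiff k h f \<circ> (\<lambda>s. x + s *\<^sub>R h)) has_derivative
        ((\<lambda>v. fdiff k h (\<lambda>y. frechet_derivative f (at y) v) (x + s *\<^sub>R h)) \<circ> (\<lambda>r. r *\<^sub>R h))) (at s)"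
      by (rule diff_chain_at[OF _ fdiff_has_derivative[OF assms]]) (auto intro!: derivative_eq_intros)
    moreover have "(\<lambda>y. frechet_derivative f (at y) (r *\<^sub>R h)) = (\<lambda>y. r * frechet_derivative f (at y) h)" for r
      using lin by (simp add: linear_cmul)
    ultimately have "(\<phi> has_derivative (\<lambda>r. r * \<phi>' s)) (at s)"
      by (simp add: \<phi>_def[abs_def] \<phi>'_def o_def fdiff_cmult)
    then show ?thesis by (simp add: has_field_derivative_def mult_commute_abs)
  qed
  then obtain z where "\<phi> 1 - \<phi> 0 = (1 - 0) * \<phi>' z"
    using MVT2[of 0 1 \<phi> \<phi>'] by auto
  then show ?thesis by (intro that[of z]) (simp add: \<phi>_def \<phi>'_def)
qed

lemma C0_inf_continuous: "C0_inf f \<Longrightarrow> continuous_on UNIV f"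
  unfolding C0_inf_def by (metis Ck.simps(1))

lemma C0_inf_differentiable: "C0_inf f \<Longrightarrow> f differentiable (at x)"
  unfolding C0_inf_def by (metis Ck.simps(2))

lemma C0_inf_bounded:
  fixes f :: "'a::euclidean_space \<Rightarrow> real"
  assumes "C0_inf f"
  obtains M where "0 < M" "\<And>x. \<bar>f x\<bar> \<le> M"
proof -
  have "compact (closure {x. f x \<noteq> 0})" using assms by (simp add: C0_inf_def)
  then obtain B where B: "\<And>x. x \<in> closure {x. f x \<noteq> 0} \<Longrightarrow> norm (f x) \<le> B"
    using continuous_on_compact_bound[OF _ continuous_on_subset[OF C0_inf_continuous[OF assms]]]
    by blast
  have bound: "\<bar>f x\<bar> \<le> \<bar>B\<bar> + 1" for x
    using B[of x] closure_subset[of "{x. f x \<noteq> 0}"] by (cases "f x = 0") auto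
  show ?thesis by (rule that[OF _ bound]) simp
qed

lemma C0_inf_frechet_derivative:
  fixes f :: "'a::euclidean_space \<Rightarrow> real"
  assumes "C0_inf f"
  shows "C0_inf (\<lambda>x. frechet_derivative f (at x) v)"
proof -
  let ?C = "closure {x. f x \<noteq> 0}"
  have "frechet_derivative f (at y) v = 0" if "y \<notin> ?C" for y
  proof -
    have "((\<lambda>_. 0) has_derivative (\<lambda>_. 0)) (at y)" by simp
    then have "(f has_derivative (\<lambda>_. 0)) (at y)"
    proof (rule has_derivative_transform_within_open[where s="- ?C"])
      fix x assume "x \<in> - ?C"
      then show "0 = f x" using closure_subset[of "{x. f x \<noteq> 0}"] by auto
    qed (use that in auto)
    then show ?thesis by (metis frechet_derivative_at)
  qed
  then have "closure {x. frechet_derivative f (at x) v \<noteq> 0} \<subseteq> ?C"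
    by (intro closure_minimal) auto
  moreover have "compact ?C" using assms by (simp add: C0_inf_def)
  ultimately have "compact (closure {x. frechet_derivative f (at x) v \<noteq> 0})"
    by (metis compact_Int_closed closed_closure inf.absorb_iff2)
  then show ?thesis using assms unfolding C0_inf_def by (metis Ck.simps(2))
qed

lemma C0_inf_fdiff_le:
  fixes f :: "'a::euclidean_space \<Rightarrow> real"
  assumes "C0_inf f"
  shows "\<exists>M\<ge>0. \<forall>h x. \<bar>fdiff k h f x\<bar> \<le> M * norm h ^ k"
  using assms
proof (induction k arbitrary: f)
  case 0
  then obtain M where "0 < M" "\<And>x. \<bar>f x\<bar> \<le> M" using C0_inf_bounded by blast
  then show ?case by (intro exI[of _ M]) auto
next
  case (Suc k)
  let ?D = "\<lambda>v y. frechet_derivative f (at y) v"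
  have d: "\<And>x. f differentiable (at x)" using Suc.prems by (rule C0_inf_differentiable)
  obtain M where M: "\<And>i h x. i \<in> Basis \<Longrightarrow> \<bar>fdiff k h (?D i) x\<bar> \<le> M i * norm h ^ k"
    using Suc.IH[OF C0_inf_frechet_derivative[OF Suc.prems]] by metis
  have Dh: "?D h = (\<lambda>y. \<Sum>i\<in>Basis. (h \<bullet> i) * ?D i y)" for h
  proof
    fix y
    have "linear (frechet_derivative f (at y))"
      using d[of y] by (simp add: frechet_derivative_works has_derivative_linear)
    then show "?D h y = (\<Sum>i\<in>Basis. (h \<bullet> i) * ?D i y)"
      by (subst euclidean_representation[of h, symmetric]) (simp add: linear_sum linear_cmul)
  qed
  have "\<bar>fdiff (Suc k) h f x\<bar> \<le> (\<Sum>i\<in>Basis. \<bar>M i\<bar>) * norm h ^ Suc k" for h x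
  proof -
    obtain z where "fdiff (Suc k) h f x = fdiff k h (?D h) (x + z *\<^sub>R h)"
      using fdiff_Suc_mean_value[OF d] .
    also have "\<dots> = (\<Sum>i\<in>Basis. (h \<bullet> i) * fdiff k h (?D i) (x + z *\<^sub>R h))"
      unfolding Dh[of h] by (rule fdiff_sum)
    also have "\<bar>\<dots>\<bar> \<le> (\<Sum>i\<in>Basis. norm h * (\<bar>M i\<bar> * norm h ^ k))"
    proof (rule order_trans[OF sum_abs sum_mono])
      fix i :: 'a assume i: "i \<in> Basis"
      have "\<bar>fdiff k h (?D i) (x + z *\<^sub>R h)\<bar> \<le> \<bar>M i\<bar> * norm h ^ k"
        using M[OF i, of h] by (smt (verit) mult_right_mono norm_ge_zero zero_le_power)
      with Basis_le_norm[OF i, of h]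
      show "\<bar>(h \<bullet> i) * fdiff k h (?D i) (x + z *\<^sub>R h)\<bar> \<le> norm h * (\<bar>M i\<bar> * norm h ^ k)"
        unfolding abs_mult by (intro mult_mono) auto
    qed
    also have "\<dots> = (\<Sum>i\<in>Basis. \<bar>M i\<bar>) * norm h ^ Suc k"
      by (simp add: sum_distrib_right sum_distrib_left mult_ac)
    finally show ?thesis .
  qed
  then show ?case by (intro exI[of _ "\<Sum>i\<in>Basis. \<bar>M i\<bar>"]) (simp add: sum_nonneg)
qed

lemma emeasure_lborel_affine_vimage:
  fixes t :: "'a::euclidean_space"
  assumes A: "A \<in> sets borel" and c: "c \<noteq> 0"
  shows "emeasure lborel A = ennreal (\<bar>c\<bar> ^ DIM('a)) * emeasure lborel ((\<lambda>h. t + c *\<^sub>R h) -` A)"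
proof -
  let ?T = "\<lambda>h::'a. t + c *\<^sub>R h"
  have "emeasure lborel A = emeasure (density (distr lborel borel ?T) (\<lambda>_. ennreal (\<bar>c\<bar> ^ DIM('a)))) A"
    using lborel_affine[OF c, of t] by simp
  also have "\<dots> = ennreal (\<bar>c\<bar> ^ DIM('a)) * emeasure (distr lborel borel ?T) A"
    using A by (simp add: emeasure_density nn_integral_cmult_indicator)
  also have "emeasure (distr lborel borel ?T) A = emeasure lborel (?T -` A)"
    using A by (subst emeasure_distr) auto
  finally show ?thesis .
qed

lemma emeasure_lborel_translation_vimage:
  fixes t :: "'a::euclidean_space"
  assumes "A \<in> sets borel"
  shows "emeasure lborel ((\<lambda>x. x + t) -` A) = emeasure lborel A"
  using emeasure_lborel_affine_vimage[OF assms, of 1 t] by (simp add: add.commute)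

lemma emeasure_lborel_dilation_vimage_le:
  fixes t :: "'a::euclidean_space"
  assumes "A \<in> sets borel" and "1 \<le> c"
  shows "emeasure lborel ((\<lambda>h. t + c *\<^sub>R h) -` A) \<le> emeasure lborel A"
proof -
  have "1 * emeasure lborel ((\<lambda>h. t + c *\<^sub>R h) -` A)
      \<le> ennreal (\<bar>c\<bar> ^ DIM('a)) * emeasure lborel ((\<lambda>h. t + c *\<^sub>R h) -` A)"
    using assms(2) by (intro mult_right_mono) (auto simp: one_le_power)
  then show ?thesis using emeasure_lborel_affine_vimage[OF assms(1), of c t] assms(2) by simp
qed

lemma ennreal_le_suminf: "(f i :: ennreal) \<le> suminf f"
  using sum_le_suminf[OF summableI, of "{i}" f] by simp

lemma ennreal_suminf_geometric_less_top:
  assumes "0 \<le> C" "0 \<le> r" "r < 1"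
  shows "(\<Sum>j. ennreal (C * r ^ j)) < \<infinity>"
proof -
  have "summable (\<lambda>j. C * r ^ j)" using assms by (intro summable_mult summable_geometric) auto
  then have "(\<Sum>j. ennreal (C * r ^ j)) \<noteq> top" by (rule ennreal_suminf_neq_top) (use assms in auto)
  then show ?thesis by (simp add: less_top)
qed

lemma nn_integral_le_suminf_emeasure:
  fixes g :: "'a \<Rightarrow> ennreal" and c :: "nat \<Rightarrow> ennreal"
  assumes E: "\<And>j. E j \<in> sets M" and g: "\<And>x. g x \<noteq> 0 \<Longrightarrow> \<exists>j. x \<in> E j \<and> g x \<le> c j"
  shows "integral\<^sup>N M g \<le> (\<Sum>j. c j * emeasure M (E j))"
proof -
  have "g x \<le> (\<Sum>j. c j * indicator (E j) x)" for x
  proof (cases "g x = 0")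
    case False
    then obtain j where "x \<in> E j" "g x \<le> c j" using g by blast
    then show ?thesis using ennreal_le_suminf[of "\<lambda>j. c j * indicator (E j) x" j] by simp
  qed simp
  then have "integral\<^sup>N M g \<le> (\<integral>\<^sup>+x. (\<Sum>j. c j * indicator (E j) x) \<partial>M)"
    by (rule nn_integral_mono)
  also have "\<dots> = (\<Sum>j. c j * emeasure M (E j))"
    using E by (simp add: nn_integral_suminf nn_integral_cmult_indicator)
  finally show ?thesis .
qed

lemma suminf_emeasure_le_nn_integral:
  fixes g :: "'a \<Rightarrow> ennreal" and c :: "nat \<Rightarrow> ennreal"
  assumes E: "\<And>j. E j \<in> sets M" and disj: "disjoint_family E"
    and g: "\<And>j x. x \<in> E j \<Longrightarrow> c j \<le> g x"
  shows "(\<Sum>j. c j * emeasure M (E j)) \<le> integral\<^sup>N M g"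
proof -
  have "(\<Sum>j. c j * indicator (E j) x) \<le> g x" for x
  proof (cases "\<exists>i. x \<in> E i")
    case True
    then obtain i where i: "x \<in> E i" by blast
    then have "x \<notin> E j" if "j \<noteq> i" for j using disj that by (auto simp: disjoint_family_on_def)
    then have "(\<Sum>j. c j * indicator (E j) x) = (\<Sum>j\<in>{i}. c j * indicator (E j) x)"
      by (intro suminf_finite) auto
    then show ?thesis using i g by simp
  qed simp
  then have "(\<integral>\<^sup>+x. (\<Sum>j. c j * indicator (E j) x) \<partial>M) \<le> integral\<^sup>N M g"
    by (rule nn_integral_mono)
  then show ?thesis using E by (simp add: nn_integral_suminf nn_integral_cmult_indicator)
qed

lemma exists_geometric_index:
  fixes t T lam :: real
  assumes "0 < t" "t \<le> T" "1 < lam"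
  shows "\<exists>i. T / lam ^ Suc i < t \<and> t \<le> T / lam ^ i"
proof -
  define i where "i = nat \<lfloor>log lam (T / t)\<rfloor>"
  have "\<lfloor>log lam (T / t)\<rfloor> = int i" using assms by (simp add: i_def)
  then have "lam powr (real i) \<le> T / t \<and> T / t < lam powr (real i + 1)"
    using assms floor_log_eq_powr_iff[of "T / t" lam "int i"] by simp
  then have "lam ^ i \<le> T / t \<and> T / t < lam ^ Suc i"
    using assms by (simp add: powr_realpow powr_add mult.commute)
  then show ?thesis using assms by (auto simp: field_simps)
qed

lemma power_powr: "0 < x \<Longrightarrow> (x ^ n) powr a = (x powr a) ^ n"
  for x :: real
  by (simp add: powr_realpow[symmetric] powr_powr powr_power mult.commute)

lemma nn_integral_ball_norm_powr_finite:
  assumes "a < real DIM('a::euclidean_space)"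
  shows "(\<integral>\<^sup>+h. indicator (ball (0::'a) 1) h * ennreal (norm h powr (- a)) \<partial>lborel) < \<infinity>"
proof (cases "a \<le> 0")
  case True
  have "(\<integral>\<^sup>+h. indicator (ball (0::'a) 1) h * ennreal (norm h powr (- a)) \<partial>lborel)
      \<le> (\<integral>\<^sup>+h. indicator (ball (0::'a) 1) h \<partial>lborel)"
    using True by (intro nn_integral_mono) (auto simp: indicator_def intro!: powr_le1)
  also have "\<dots> < \<infinity>" by (simp add: emeasure_ball)
  finally show ?thesis .
next
  case False
  let ?n = "DIM('a)" and ?\<omega> = "unit_ball_vol (real DIM('a))"
  define E where "E j = {h::'a. 1 / 2 ^ Suc j < norm h \<and> norm h \<le> 1 / 2 ^ j}" for j :: nat
  have Em: "E j \<in> sets lborel" for j unfolding E_def by measurable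
  have "(\<integral>\<^sup>+h. indicator (ball (0::'a) 1) h * ennreal (norm h powr (- a)) \<partial>lborel)
      \<le> (\<Sum>j. ennreal ((2 powr a) ^ Suc j) * emeasure lborel (E j))"
  proof (rule nn_integral_le_suminf_emeasure)
    fix h :: 'a
    assume "indicator (ball 0 1) h * ennreal (norm h powr (- a)) \<noteq> 0"
    then have h: "0 < norm h" "norm h \<le> 1" by (auto simp: indicator_def split: if_splits)
    then obtain j where j: "1 / 2 ^ Suc j < norm h" "norm h \<le> 1 / 2 ^ j"
      using exists_geometric_index[of "norm h" 1 2] by auto
    have "norm h powr (- a) \<le> (1 / 2 ^ Suc j) powr (- a)"
      using j False by (intro powr_mono2') auto
    also have "\<dots> = (2 powr a) ^ Suc j"
      using power_powr[of 2 "Suc j" a] by (simp add: powr_divide powr_minus_divide)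
    finally show "\<exists>j. h \<in> E j \<and> indicator (ball 0 1) h * ennreal (norm h powr (- a)) \<le> ennreal ((2 powr a) ^ Suc j)"
      using j h by (auto simp: E_def indicator_def intro!: ennreal_leI)
  qed (use Em in simp)
  also have "\<dots> \<le> (\<Sum>j. ennreal (2 powr a * ?\<omega> * (2 powr a / 2 ^ ?n) ^ j))"
  proof (intro suminf_le summableI)
    fix j
    have "emeasure lborel (E j) \<le> emeasure lborel (cball (0::'a) (1 / 2 ^ j))"
      by (intro emeasure_mono) (auto simp: E_def)
    also have "\<dots> = ennreal (?\<omega> * (1 / 2 ^ j) ^ ?n)" by (simp add: emeasure_cball)
    finally have "ennreal ((2 powr a) ^ Suc j) * emeasure lborel (E j)
        \<le> ennreal ((2 powr a) ^ Suc j * (?\<omega> * (1 / 2 ^ j) ^ ?n))"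
      by (simp add: ennreal_mult'' mult_left_mono)
    also have "(2 powr a) ^ Suc j * (?\<omega> * (1 / 2 ^ j) ^ ?n) = 2 powr a * ?\<omega> * (2 powr a / 2 ^ ?n) ^ j"
      by (simp add: power_divide power_mult[symmetric] power_mult_distrib mult.commute[of j])
    finally show "ennreal ((2 powr a) ^ Suc j) * emeasure lborel (E j) \<le> ennreal (2 powr a * ?\<omega> * (2 powr a / 2 ^ ?n) ^ j)" .
  qed
  also have "\<dots> < \<infinity>"
  proof (rule ennreal_suminf_geometric_less_top)
    have "2 powr a < 2 powr real ?n" using assms by simp
    then show "2 powr a / 2 ^ ?n < 1" by (simp add: powr_realpow)
  qed auto
  finally show ?thesis .
qed

lemma nn_integral_outside_ball_norm_powr_finite:
  assumes "real DIM('a::euclidean_space) < b"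
  shows "(\<integral>\<^sup>+h. indicator (- ball (0::'a) 1) h * ennreal (norm h powr (- b)) \<partial>lborel) < \<infinity>"
proof -
  let ?n = "DIM('a)" and ?\<omega> = "unit_ball_vol (real DIM('a))"
  have b: "0 < b" using assms DIM_positive[where 'a='a] by linarith
  define E where "E j = {h::'a. 2 ^ j \<le> norm h \<and> norm h < 2 ^ Suc j}" for j :: nat
  have Em: "E j \<in> sets lborel" for j unfolding E_def by measurable
  have "(\<integral>\<^sup>+h. indicator (- ball (0::'a) 1) h * ennreal (norm h powr (- b)) \<partial>lborel)
      \<le> (\<Sum>j. ennreal ((2 powr (- b)) ^ j) * emeasure lborel (E j))"
  proof (rule nn_integral_le_suminf_emeasure)
    fix h :: 'a
    assume "indicator (- ball 0 1) h * ennreal (norm h powr (- b)) \<noteq> 0"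
    then have h: "1 \<le> norm h" by (auto simp: indicator_def split: if_splits)
    then obtain j where "norm h / 2 ^ Suc j < 1" "1 \<le> norm h / 2 ^ j"
      using exists_geometric_index[of 1 "norm h" 2] by auto
    then have j: "2 ^ j \<le> norm h" "norm h < 2 ^ Suc j"
      by (simp_all only: divide_less_eq le_divide_eq zero_less_power zero_less_numeral) simp_all
    have "norm h powr (- b) \<le> (2 ^ j) powr (- b)"
      using j b by (intro powr_mono2') auto
    also have "\<dots> = (2 powr (- b)) ^ j" by (simp add: power_powr)
    finally show "\<exists>j. h \<in> E j \<and> indicator (- ball 0 1) h * ennreal (norm h powr (- b)) \<le> ennreal ((2 powr (- b)) ^ j)"
      using j h by (auto simp: E_def indicator_def intro!: ennreal_leI)
  qed (use Em in simp)
  also have "\<dots> \<le> (\<Sum>j. ennreal (2 ^ ?n * ?\<omega> * (2 ^ ?n * 2 powr (- b)) ^ j))"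
  proof (intro suminf_le summableI)
    fix j
    have pow: "((2::real) ^ Suc j) ^ ?n = 2 ^ ?n * (2 ^ ?n) ^ j"
      by (simp add: power_mult_distrib flip: power_mult)
    have "emeasure lborel (E j) \<le> emeasure lborel (cball (0::'a) (2 ^ Suc j))"
      by (intro emeasure_mono) (auto simp: E_def)
    also have "\<dots> = ennreal (?\<omega> * (2 ^ Suc j) ^ ?n)" by (simp add: emeasure_cball)
    finally have "ennreal ((2 powr (- b)) ^ j) * emeasure lborel (E j)
        \<le> ennreal ((2 powr (- b)) ^ j) * ennreal (?\<omega> * (2 ^ ?n * (2 ^ ?n) ^ j))"
      unfolding pow by (rule mult_left_mono) simp
    also have "\<dots> = ennreal (2 ^ ?n * ?\<omega> * (2 ^ ?n * 2 powr (- b)) ^ j)"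
      by (simp add: power_mult_distrib mult_ac flip: ennreal_mult)
    finally show "ennreal ((2 powr (- b)) ^ j) * emeasure lborel (E j) \<le> \<dots>" .
  qed
  also have "\<dots> < \<infinity>"
  proof (rule ennreal_suminf_geometric_less_top)
    have "2 powr real ?n < 2 powr b" using assms by simp
    then show "2 ^ ?n * 2 powr (- b) < 1" by (simp add: powr_realpow powr_minus field_simps)
  qed auto
  finally show ?thesis .
qed

section \<open>Finiteness of the Besov integral\<close>

definition besov_integral :: "nat \<Rightarrow> real \<Rightarrow> real \<Rightarrow> ('a::euclidean_space \<Rightarrow> real) \<Rightarrow> ennreal" where
  "besov_integral k \<beta> p f =
     (\<integral>\<^sup>+ h. (\<integral>\<^sup>+ x. ennreal (\<bar>fdiff k h f x\<bar> powr p) \<partial>lborel)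
         * ennreal (norm h powr (- (real DIM('a) + \<beta> * p))) \<partial>lborel)"

lemma besov_norm_eq: "besov_norm \<beta> p f = enn2real (besov_integral (nat (1 + \<lfloor>\<beta>\<rfloor>)) \<beta> p f) powr (1 / p)"
  by (simp add: besov_norm_def besov_integral_def)

text \<open>\<open>\<Delta>\<^sup>k\<^sub>h f\<close> is supported in \<open>k + 1\<close> translates of the support of \<open>f\<close>.\<close>

lemma nn_integral_fdiff_powr_le:
  fixes f :: "'a::euclidean_space \<Rightarrow> real"
  assumes S: "compact S" "{x. f x \<noteq> 0} \<subseteq> S" and B: "\<And>x. \<bar>fdiff k h f x\<bar> \<le> B" and p: "0 < p"
  shows "(\<integral>\<^sup>+x. ennreal (\<bar>fdiff k h f x\<bar> powr p) \<partial>lborel)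
          \<le> ennreal (B powr p * (real (Suc k) * measure lborel S))"
proof -
  define E where "E = (\<Union>j\<in>{..k}. (\<lambda>x. x + of_nat j *\<^sub>R h) -` S)"
  have Sb: "S \<in> sets borel" using S by (simp add: compact_imp_closed)
  have Em: "(\<lambda>x. x + of_nat j *\<^sub>R h) -` S \<in> sets lborel" for j
    using measurable_sets_borel[OF _ Sb, of "\<lambda>x. x + of_nat j *\<^sub>R h"] by simp
  then have EM: "E \<in> sets lborel" unfolding E_def by auto
  have "ennreal (\<bar>fdiff k h f x\<bar> powr p) \<le> ennreal (B powr p) * indicator E x" for x
  proof (cases "fdiff k h f x = 0")
    case False
    then have "x \<in> E" using fdiff_nonzero_imp[OF False] S(2) by (auto simp: E_def)
    moreover have "\<bar>fdiff k h f x\<bar> powr p \<le> B powr p" using B[of x] p by (intro powr_mono2) auto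
    ultimately show ?thesis by (simp add: ennreal_leI)
  qed simp
  then have "(\<integral>\<^sup>+x. ennreal (\<bar>fdiff k h f x\<bar> powr p) \<partial>lborel)
      \<le> (\<integral>\<^sup>+x. ennreal (B powr p) * indicator E x \<partial>lborel)"
    by (rule nn_integral_mono)
  also have "\<dots> = ennreal (B powr p) * emeasure lborel E"
    by (rule nn_integral_cmult_indicator) (use EM in simp)
  also have "emeasure lborel E \<le> (\<Sum>j\<le>k. emeasure lborel ((\<lambda>x. x + of_nat j *\<^sub>R h) -` S))"
    unfolding E_def by (intro emeasure_subadditive_finite) (use Em in auto)
  also have "\<dots> = of_nat (Suc k) * emeasure lborel S"
    using emeasure_lborel_translation_vimage[OF Sb] by simp
  also have "\<dots> = ennreal (real (Suc k) * measure lborel S)"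
  proof -
    have "emeasure lborel S < \<infinity>" using S(1) by (intro emeasure_bounded_finite compact_imp_bounded)
    then show ?thesis by (simp add: emeasure_eq_ennreal_measure less_top[symmetric] ennreal_of_nat_eq_real_of_nat ennreal_mult'')
  qed
  finally show ?thesis by (simp add: ennreal_mult'' mult_left_mono)
qed

lemma nn_integral_fdiff_powr_weighted_le:
  fixes f :: "'a::euclidean_space \<Rightarrow> real"
  assumes S: "compact S" "{x. f x \<noteq> 0} \<subseteq> S" and M: "0 \<le> M" "\<And>h x. \<bar>fdiff k h f x\<bar> \<le> M * norm h ^ k"
    and T: "\<And>x. \<bar>f x\<bar> \<le> T" and p: "0 < p"
  defines "V \<equiv> real (Suc k) * measure lborel S"
  shows "(\<integral>\<^sup>+x. ennreal (\<bar>fdiff k h f x\<bar> powr p) \<partial>lborel) * ennreal (norm h powr (- c))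
    \<le> ennreal (M powr p * V) * (indicator (ball 0 1) h * ennreal (norm h powr (- (c - real k * p))))
      + ennreal ((2 ^ k * T) powr p * V) * (indicator (- ball 0 1) h * ennreal (norm h powr (- c)))"
proof (cases "h \<in> ball 0 1")
  case True
  show ?thesis
  proof (cases "h = 0")
    case False
    have powers: "(M * norm h ^ k) powr p * norm h powr (- c) = M powr p * norm h powr (- (c - real k * p))"
      using False M(1) by (simp add: powr_mult power_powr powr_power powr_add[symmetric] algebra_simps)
    have "(\<integral>\<^sup>+x. ennreal (\<bar>fdiff k h f x\<bar> powr p) \<partial>lborel) * ennreal (norm h powr (- c))
        \<le> ennreal ((M * norm h ^ k) powr p * V) * ennreal (norm h powr (- c))"
      unfolding V_def by (intro mult_right_mono nn_integral_fdiff_powr_le S M p) simp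
    also have "\<dots> = ennreal ((M * norm h ^ k) powr p * norm h powr (- c) * V)"
      by (subst ennreal_mult'[symmetric]) (simp_all add: V_def mult_ac)
    also have "\<dots> = ennreal (M powr p * V) * (indicator (ball 0 1) h * ennreal (norm h powr (- (c - real k * p))))"
      unfolding powers using True by (simp add: V_def ennreal_mult' mult_ac)
    finally show ?thesis by (simp add: add_increasing2)
  qed simp
next
  case False
  have "(\<integral>\<^sup>+x. ennreal (\<bar>fdiff k h f x\<bar> powr p) \<partial>lborel) * ennreal (norm h powr (- c))
      \<le> ennreal ((2 ^ k * T) powr p * V) * ennreal (norm h powr (- c))"
    unfolding V_def by (intro mult_right_mono nn_integral_fdiff_powr_le S fdiff_abs_le T p) simp
  then show ?thesis using False by (simp add: add_increasing)
qed

lemma besov_integral_finite: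
  fixes f :: "'a::euclidean_space \<Rightarrow> real"
  assumes f: "C0_inf f" and \<beta>: "0 < \<beta>" "\<beta> < real k" and p: "0 < p"
  shows "besov_integral k \<beta> p f < \<infinity>"
proof -
  define n where "n = real DIM('a)"
  define S where "S = closure {x. f x \<noteq> 0}"
  define V where "V = real (Suc k) * measure lborel S"
  have S: "compact S" "{x. f x \<noteq> 0} \<subseteq> S"
    using f by (simp_all add: S_def C0_inf_def closure_subset)
  obtain M where M: "0 \<le> M" "\<And>h x. \<bar>fdiff k h f x\<bar> \<le> M * norm h ^ k"
    using C0_inf_fdiff_le[OF f] by blast
  obtain T where T: "0 < T" "\<And>x. \<bar>f x\<bar> \<le> T" using C0_inf_bounded[OF f] by blast
  define F1 where "F1 h = indicator (ball 0 1) h * ennreal (norm h powr (- (n + \<beta> * p - real k * p)))" for h :: 'a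
  define F2 where "F2 h = indicator (- ball 0 1) h * ennreal (norm h powr (- (n + \<beta> * p)))" for h :: 'a
  have [measurable]: "ball (0::'a) 1 \<in> sets borel" by simp
  have [measurable]: "F1 \<in> borel_measurable lborel" "F2 \<in> borel_measurable lborel"
    unfolding F1_def F2_def by measurable
  have "besov_integral k \<beta> p f
      \<le> (\<integral>\<^sup>+h. ennreal (M powr p * V) * F1 h + ennreal ((2 ^ k * T) powr p * V) * F2 h \<partial>lborel)"
    unfolding besov_integral_def n_def[symmetric] F1_def F2_def V_def
    by (intro nn_integral_mono nn_integral_fdiff_powr_weighted_le S M T p)
  also have "\<dots> = ennreal (M powr p * V) * integral\<^sup>N lborel F1 + ennreal ((2 ^ k * T) powr p * V) * integral\<^sup>N lborel F2"
    by (simp add: nn_integral_add nn_integral_cmult)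
  also have "\<dots> < \<infinity>"
  proof -
    have "integral\<^sup>N lborel F1 < \<infinity>" unfolding F1_def n_def
      by (rule nn_integral_ball_norm_powr_finite) (use \<beta> p in \<open>simp add: algebra_simps\<close>)
    moreover have "integral\<^sup>N lborel F2 < \<infinity>" unfolding F2_def n_def
      by (rule nn_integral_outside_ball_norm_powr_finite) (use \<beta> p in simp)
    ultimately show ?thesis by (simp add: ennreal_mult_less_top)
  qed
  finally show ?thesis .
qed

section \<open>An absorption inequality for increasing sequences\<close>

lemma powr_le_split:
  fixes x y r g \<theta> :: real
  assumes x: "0 \<le> x" "x \<le> y" and g: "g < 1" and \<theta>: "0 < \<theta>" "\<theta> powr (1 - g) = r / 2"
  shows "x powr (1 - g) \<le> r / 2 * y powr (1 - g) + x * y powr (- g) / \<theta>"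
proof (cases "x < \<theta> * y")
  case True
  have "x powr (1 - g) \<le> (\<theta> * y) powr (1 - g)"
    using True x g by (intro powr_mono2) auto
  also have "\<dots> = r / 2 * y powr (1 - g)"
    using \<theta> x by (simp add: powr_mult)
  finally have "x powr (1 - g) \<le> r / 2 * y powr (1 - g)" .
  moreover have "0 \<le> x * y powr (- g) / \<theta>" using x \<theta> by simp
  ultimately show ?thesis by linarith
next
  case False
  show ?thesis
  proof (cases "y = 0")
    case True
    then show ?thesis using x \<theta> by (simp add: powr_mult)
  next
    case y: False
    have "x powr (1 - g) \<le> y powr (1 - g)"
      using x g by (intro powr_mono2) auto
    also have "\<dots> = y * y powr (- g)"
      using x y by (simp add: powr_diff powr_minus divide_inverse)
    also have "\<dots> \<le> x / \<theta> * y powr (- g)"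
      using False \<theta> by (intro mult_right_mono) (auto simp: field_simps)
    finally have "x powr (1 - g) \<le> x * y powr (- g) / \<theta>" by simp
    moreover have "0 \<le> r / 2 * y powr (1 - g)" using \<theta> by (simp flip: \<theta>(2))
    ultimately show ?thesis by linarith
  qed
qed

lemma suminf_ennreal_cmult:
  fixes x :: "nat \<Rightarrow> real"
  assumes "summable x" "\<And>i. 0 \<le> x i" "0 \<le> C"
  shows "(\<Sum>i. ennreal (C * x i)) = ennreal (C * suminf x)"
  using assms by (subst suminf_ennreal2) (auto intro: summable_mult simp: suminf_mult)

lemma suminf_Suc_le:
  fixes x :: "nat \<Rightarrow> real"
  assumes "summable x" "\<And>i. 0 \<le> x i"
  shows "(\<Sum>i. x (Suc i)) \<le> suminf x"
  using assms by (subst suminf_split_head) auto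

lemma suminf_le_by_absorption:
  fixes c u :: "nat \<Rightarrow> real"
  assumes c: "summable c" "\<And>i. 0 \<le> c i" and u: "summable u"
    and step: "\<And>i. c i \<le> c (Suc i) / 2 + K * u i"
  shows "suminf c \<le> 2 * K * suminf u"
proof -
  have "suminf c \<le> (\<Sum>i. c (Suc i) / 2 + K * u i)"
    using c u by (intro suminf_le step summable_add summable_mult summable_divide) (auto simp: summable_Suc_iff)
  also have "\<dots> = (\<Sum>i. c (Suc i)) / 2 + K * suminf u"
    using c u by (subst suminf_add[symmetric])
      (auto intro!: summable_mult summable_divide simp: summable_Suc_iff suminf_mult suminf_divide)
  finally show ?thesis using suminf_Suc_le[OF c] by linarith
qed

lemma incseq_weighted_powr_suminf_le:
  fixes a :: "nat \<Rightarrow> real" and r g C V :: real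
  assumes a: "\<And>i. 0 \<le> a i" "\<And>i. a i \<le> a (Suc i)" "\<And>i. a i \<le> V"
    and r: "0 < r" "r < 1" and g: "0 < g" "g < 1" and C: "0 \<le> C"
  defines "c \<equiv> \<lambda>i. C * r ^ i * a i powr (1 - g)"
    and "u \<equiv> \<lambda>i. C * r ^ Suc i * a i * a (Suc i) powr (- g)"
    and "\<theta> \<equiv> (r / 2) powr (1 / (1 - g))"
  shows "summable c" and "summable u" and "suminf c \<le> 2 / (r * \<theta>) * suminf u"
proof -
  have \<theta>: "0 < \<theta>" "\<theta> powr (1 - g) = r / 2"
    using r g by (simp_all add: \<theta>_def powr_powr)
  have c_le: "c i \<le> C * V powr (1 - g) * r ^ i" for i
    using a C r g by (simp add: c_def mult_left_mono powr_mono2 mult_ac)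
  have c0: "0 \<le> c i" for i using C r by (simp add: c_def)
  show sc: "summable c"
    by (rule summable_comparison_test'[OF summable_mult[OF summable_geometric]])
       (use r c0 c_le in auto)
  have u_le: "u i \<le> c (Suc i)" for i
  proof (cases "a (Suc i) = 0")
    case False
    then have "a i * a (Suc i) powr (- g) \<le> a (Suc i) * a (Suc i) powr (- g)"
      using a by (simp add: mult_right_mono)
    also have "\<dots> = a (Suc i) powr (1 - g)"
      using a(1)[of "Suc i"] False by (simp add: powr_diff powr_minus divide_inverse)
    finally show ?thesis unfolding u_def c_def using C r
      by (simp add: mult.assoc mult_left_mono)
  qed (use C r a in \<open>simp add: u_def c_def\<close>)
  have u0: "0 \<le> u i" for i using C r a by (simp add: u_def)
  show su: "summable u"
    by (rule summable_comparison_test'[where g="\<lambda>i. c (Suc i)"])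
       (use u0 u_le sc in \<open>auto simp: summable_Suc_iff\<close>)
  have step: "c i \<le> c (Suc i) / 2 + 1 / (r * \<theta>) * u i" for i
  proof -
    have "a i powr (1 - g) \<le> r / 2 * a (Suc i) powr (1 - g) + a i * a (Suc i) powr (- g) / \<theta>"
      using powr_le_split[OF a(1) a(2) g(2) \<theta>] .
    then have "C * r ^ i * a i powr (1 - g)
        \<le> C * r ^ i * (r / 2 * a (Suc i) powr (1 - g) + a i * a (Suc i) powr (- g) / \<theta>)"
      using C r by (intro mult_left_mono) auto
    then show ?thesis using r \<theta> by (simp add: c_def u_def field_simps)
  qed
  show "suminf c \<le> 2 / (r * \<theta>) * suminf u"
    using suminf_le_by_absorption[OF sc c0 su step] by simp
qed

section \<open>Geometric level sets\<close>

locale geometric_levels =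
  fixes f :: "'a::euclidean_space \<Rightarrow> real" and T lam :: real
  assumes continuous: "continuous_on UNIV f" and T_pos: "0 < T" and abs_le_T: "\<And>x. \<bar>f x\<bar> \<le> T"
    and lam_gt_1: "1 < lam" and compact_support: "compact (closure {x. f x \<noteq> 0})"
begin

definition height :: "nat \<Rightarrow> real" where
  "height i = T / lam ^ i"

definition vol :: "nat \<Rightarrow> real" where
  "vol i = measure lborel (level_set f (height i))"

lemma height_pos: "0 < height i"
  using T_pos lam_gt_1 by (simp add: height_def)

lemma height_Suc: "height i = lam * height (Suc i)"
  using lam_gt_1 by (simp add: height_def)

lemma height_antimono: "i \<le> j \<Longrightarrow> height j \<le> height i"
  using T_pos lam_gt_1 by (simp add: height_def divide_left_mono power_increasing)

lemma height_powr: "height i powr p = T powr p * (lam powr (- p)) ^ i"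
proof -
  have "height i powr p = T powr p / (lam powr p) ^ i"
    using T_pos lam_gt_1 by (simp add: height_def powr_divide power_powr)
  then show ?thesis by (simp add: powr_minus power_inverse divide_inverse)
qed

lemma height_index:
  assumes "0 < t" "t \<le> T"
  obtains i where "height (Suc i) < t" "t \<le> height i"
  using exists_geometric_index[OF assms lam_gt_1] by (auto simp: height_def)

lemma open_level_set: "open (level_set f t)"
  unfolding level_set_def using continuous by (intro open_Collect_less) (auto intro!: continuous_intros)

lemma level_set_sets [measurable, simp]: "level_set f t \<in> sets borel"
  using open_level_set by simp

lemma level_set_subset_support: "0 \<le> t \<Longrightarrow> level_set f t \<subseteq> closure {x. f x \<noteq> 0}"
  unfolding level_set_def using closure_subset by fastforce

lemma level_set_fmeasurable: "0 \<le> t \<Longrightarrow> level_set f t \<in> fmeasurable lborel"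
  using emeasure_mono[OF level_set_subset_support, of t lborel]
    emeasure_bounded_finite[OF compact_imp_bounded[OF compact_support]]
  by (intro fmeasurableI) auto

lemma emeasure_level_set: "0 \<le> t \<Longrightarrow> emeasure lborel (level_set f t) = ennreal (measure lborel (level_set f t))"
  using level_set_fmeasurable by (simp add: emeasure_eq_measure2)

lemma measure_level_set_antimono:
  assumes "0 \<le> t" "t \<le> t'"
  shows "measure lborel (level_set f t') \<le> measure lborel (level_set f t)"
proof (rule measure_mono_fmeasurable)
  show "level_set f t' \<subseteq> level_set f t" using assms by (auto simp: level_set_def)
qed (use assms level_set_fmeasurable in auto)

lemma level_set_eq_empty:
  assumes "T \<le> t" shows "level_set f t = {}"
proof -
  have "\<not> t < \<bar>f x\<bar>" for x using abs_le_T[of x] assms by linarith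
  then show ?thesis by (auto simp: level_set_def)
qed

lemma measure_level_set_pos:
  assumes "x \<in> level_set f t" "0 \<le> t"
  shows "0 < measure lborel (level_set f t)"
proof -
  obtain e where e: "0 < e" "ball x e \<subseteq> level_set f t"
    using open_level_set assms(1) by (meson open_contains_ball)
  have "0 < emeasure lborel (ball x e)" using e(1) by (simp add: emeasure_ball)
  also have "\<dots> \<le> emeasure lborel (level_set f t)" using e(2) by (intro emeasure_mono) auto
  finally show ?thesis using emeasure_level_set[OF assms(2)] by simp
qed

lemma vol_nonneg: "0 \<le> vol i"
  by (simp add: vol_def)

lemma vol_mono: "i \<le> j \<Longrightarrow> vol i \<le> vol j"
  unfolding vol_def using height_pos by (intro measure_level_set_antimono height_antimono) (auto intro: less_imp_le)

lemma vol_le_support: "vol i \<le> measure lborel (closure {x. f x \<noteq> 0})"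
  unfolding vol_def using level_set_subset_support[of "height i"] height_pos[of i]
    emeasure_bounded_finite[OF compact_imp_bounded[OF compact_support]]
  by (intro measure_mono_fmeasurable) (auto intro!: fmeasurableI)

lemma emeasure_level_set_height: "emeasure lborel (level_set f (height i)) = ennreal (vol i)"
  using emeasure_level_set[of "height i"] height_pos[of i] by (simp add: vol_def)

end

lemma powr_le_powr_mult:
  fixes x X s :: real
  assumes "0 \<le> x" "x \<le> X" "1 \<le> s"
  shows "x powr s \<le> X powr (s - 1) * x"
proof (cases "x = 0")
  case False
  then have "x powr s = x powr (s - 1) * x" using assms(1) by (simp add: powr_diff)
  also have "\<dots> \<le> X powr (s - 1) * x" using assms by (intro mult_right_mono powr_mono2) auto
  finally show ?thesis .
qed simp

lemma ennreal_suminf_powr_le: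
  fixes x :: "nat \<Rightarrow> real"
  assumes x: "summable x" "\<And>i. 0 \<le> x i" and s: "1 \<le> s"
  shows "(\<Sum>i. ennreal (x i powr s)) \<le> ennreal (suminf x powr s)"
proof -
  define X where "X = suminf x"
  have X: "0 \<le> X" "\<And>i. x i \<le> X"
    unfolding X_def using x by (auto intro: suminf_nonneg sum_le_suminf[of _ "{_}", simplified])
  have "(\<Sum>i. ennreal (x i powr s)) \<le> (\<Sum>i. ennreal (X powr (s - 1) * x i))"
    using X x s by (intro suminf_le summableI ennreal_leI powr_le_powr_mult) auto
  also have "\<dots> = ennreal (X powr (s - 1) * X)"
    unfolding X_def using x by (intro suminf_ennreal_cmult) auto
  also have "X powr (s - 1) * X = X powr s"
    using X(1) by (cases "X = 0") (auto simp: powr_diff)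
  finally show ?thesis by (simp add: X_def)
qed

text \<open>\<open>\<integral>\<^sub>0\<^sup>\<infinity> V(O\<^sub>t f)\<^sup>e d(t\<^sup>p)\<close>, with \<open>d(t\<^sup>p)\<close> written as the density \<open>p t\<^sup>p\<^sup>-\<^sup>1\<close>.\<close>

definition level_integral :: "real \<Rightarrow> real \<Rightarrow> ('a::euclidean_space \<Rightarrow> real) \<Rightarrow> ennreal" where
  "level_integral p e f =
     (\<integral>\<^sup>+ t. indicator {0<..} t * ennreal (p * t powr (p - 1) * measure lborel (level_set f t) powr e) \<partial>lborel)"

context geometric_levels
begin

definition level_term :: "real \<Rightarrow> real \<Rightarrow> nat \<Rightarrow> real" where
  "level_term p e i = height i powr p * vol i powr e"

lemma level_term_nonneg: "0 \<le> level_term p e i"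
  by (simp add: level_term_def)

lemma summable_level_term:
  assumes "0 < e" "e < 1" "0 < p"
  shows "summable (level_term p e)"
proof -
  have "lam powr (- p) < 1" by (rule powr_less_one) (use lam_gt_1 assms in auto)
  then have "summable (\<lambda>i. T powr p * (lam powr (- p)) ^ i * vol i powr (1 - (1 - e)))"
    using assms lam_gt_1 by (intro incseq_weighted_powr_suminf_le(1)[OF vol_nonneg _ vol_le_support])
      (auto intro: vol_mono)
  moreover have "level_term p e = (\<lambda>i. T powr p * (lam powr (- p)) ^ i * vol i powr (1 - (1 - e)))"
    by (simp add: fun_eq_iff level_term_def height_powr)
  ultimately show ?thesis by simp
qed

definition height_interval :: "nat \<Rightarrow> real set" where
  "height_interval i = {height (Suc i)<..height i}"

lemma height_interval_sets [measurable]: "height_interval i \<in> sets borel"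
  by (simp add: height_interval_def)

lemma emeasure_height_interval: "emeasure lborel (height_interval i) = ennreal (height i - height (Suc i))"
  using height_antimono[of i "Suc i"] by (simp add: height_interval_def)

lemma disjoint_family_height_interval: "disjoint_family height_interval"
  unfolding disjoint_family_on_def
proof (intro ballI impI)
  fix i j :: nat assume "i \<noteq> j"
  then have "height (max i j) \<le> height (Suc (min i j))" by (intro height_antimono) auto
  then show "height_interval i \<inter> height_interval j = {}"
    by (cases "i \<le> j") (auto simp: height_interval_def max_def min_def)
qed

lemma height_interval_powr_le: "height i powr (p - 1) * (height i - height (Suc i)) \<le> lam powr p * height (Suc i) powr p"
proof -
  have "height i powr (p - 1) * (height i - height (Suc i)) \<le> height i powr (p - 1) * height i"
    using height_pos[of "Suc i"] by (intro mult_left_mono) auto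
  also have "\<dots> = lam powr p * height (Suc i) powr p"
    using height_pos[of i] height_pos[of "Suc i"] lam_gt_1 by (simp add: powr_diff height_Suc[of i] powr_mult)
  finally show ?thesis .
qed

lemma height_interval_powr_eq:
  "height (Suc i) powr (p - 1) * (height i - height (Suc i)) = (lam - 1) * lam powr (- p) * height i powr p"
proof -
  have "height i - height (Suc i) = (lam - 1) * height (Suc i)"
    by (simp add: height_Suc[of i] algebra_simps)
  moreover have "height (Suc i) powr (p - 1) * height (Suc i) = height (Suc i) powr p"
    using height_pos[of "Suc i"] by (simp add: powr_diff)
  moreover have "height (Suc i) powr p = lam powr (- p) * height i powr p"
    using height_pos[of "Suc i"] lam_gt_1 by (simp add: height_Suc[of i] powr_mult powr_minus)
  ultimately show ?thesis by (simp add: algebra_simps)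
qed

lemma level_integral_le_level_sum:
  assumes p: "1 \<le> p" and e: "0 < e" "e < 1"
  shows "level_integral p e f \<le> ennreal (p * lam powr p * suminf (level_term p e))"
proof -
  have "level_integral p e f
      \<le> (\<Sum>i. ennreal (p * height i powr (p - 1) * vol (Suc i) powr e) * emeasure lborel (height_interval i))"
    unfolding level_integral_def
  proof (rule nn_integral_le_suminf_emeasure)
    fix t :: real
    assume nz: "indicator {0<..} t * ennreal (p * t powr (p - 1) * measure lborel (level_set f t) powr e) \<noteq> 0"
    then have "0 < t" and "\<not> T \<le> t"
      using e by (auto simp: indicator_def level_set_eq_empty split: if_splits)
    then obtain i where i: "height (Suc i) < t" "t \<le> height i" by (elim height_index) auto
    have "t powr (p - 1) \<le> height i powr (p - 1)" using i \<open>0 < t\<close> p by (intro powr_mono2) auto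
    moreover have "measure lborel (level_set f t) powr e \<le> vol (Suc i) powr e"
      unfolding vol_def using i e height_pos[of "Suc i"] by (intro powr_mono2 measure_level_set_antimono) auto
    ultimately have "p * t powr (p - 1) * measure lborel (level_set f t) powr e
        \<le> p * height i powr (p - 1) * vol (Suc i) powr e"
      using p by (intro mult_mono) auto
    then show "\<exists>i. t \<in> height_interval i \<and> indicator {0<..} t * ennreal (p * t powr (p - 1) * measure lborel (level_set f t) powr e)
        \<le> ennreal (p * height i powr (p - 1) * vol (Suc i) powr e)"
      using i \<open>0 < t\<close> by (intro exI[of _ i]) (auto simp: height_interval_def intro: ennreal_leI)
  qed simp
  also have "\<dots> \<le> (\<Sum>i. ennreal (p * lam powr p * level_term p e (Suc i)))"
  proof (intro suminf_le summableI)
    fix i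
    have "p * height i powr (p - 1) * vol (Suc i) powr e * (height i - height (Suc i))
        \<le> p * lam powr p * level_term p e (Suc i)"
      using mult_left_mono[OF height_interval_powr_le, of "p * vol (Suc i) powr e" i p] p
      by (simp add: level_term_def mult_ac)
    then show "ennreal (p * height i powr (p - 1) * vol (Suc i) powr e) * emeasure lborel (height_interval i)
        \<le> ennreal (p * lam powr p * level_term p e (Suc i))"
      using height_antimono[of i "Suc i"]
      by (simp add: emeasure_height_interval ennreal_leI flip: ennreal_mult'')
  qed
  also have "\<dots> = ennreal (p * lam powr p * (\<Sum>i. level_term p e (Suc i)))"
    using summable_level_term[OF e] p
    by (intro suminf_ennreal_cmult) (auto simp: level_term_nonneg summable_Suc_iff)
  also have "\<dots> \<le> ennreal (p * lam powr p * suminf (level_term p e))"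
    using summable_level_term[OF e] p
    by (intro ennreal_leI mult_left_mono suminf_Suc_le) (auto simp: level_term_nonneg)
  finally show ?thesis .
qed

lemma level_sum_le_level_integral:
  assumes p: "1 \<le> p" and e: "0 < e" "e < 1"
  shows "ennreal (p * (lam - 1) * lam powr (- p) * suminf (level_term p e)) \<le> level_integral p e f"
proof -
  have "ennreal (p * (lam - 1) * lam powr (- p) * suminf (level_term p e))
      = (\<Sum>i. ennreal (p * (lam - 1) * lam powr (- p) * level_term p e i))"
    using summable_level_term[OF e] p lam_gt_1
    by (intro suminf_ennreal_cmult[symmetric]) (auto simp: level_term_nonneg)
  also have "\<dots> = (\<Sum>i. ennreal (p * height (Suc i) powr (p - 1) * vol i powr e) * emeasure lborel (height_interval i))"
  proof (rule arg_cong[where f = suminf], rule ext)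
    fix i
    have eq: "p * (lam - 1) * lam powr (- p) * level_term p e i
        = p * height (Suc i) powr (p - 1) * vol i powr e * (height i - height (Suc i))"
      by (simp add: level_term_def height_interval_powr_eq mult_ac)
    show "ennreal (p * (lam - 1) * lam powr (- p) * level_term p e i)
        = ennreal (p * height (Suc i) powr (p - 1) * vol i powr e) * emeasure lborel (height_interval i)"
      unfolding eq using height_antimono[of i "Suc i"] by (simp add: emeasure_height_interval ennreal_mult'')
  qed
  also have "\<dots> \<le> level_integral p e f"
    unfolding level_integral_def
  proof (rule suminf_emeasure_le_nn_integral[OF _ disjoint_family_height_interval])
    fix i and t :: real
    assume "t \<in> height_interval i"
    then have i: "height (Suc i) < t" "t \<le> height i" by (auto simp: height_interval_def)
    have t: "0 < t" using i height_pos[of "Suc i"] by linarith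
    have "height (Suc i) powr (p - 1) \<le> t powr (p - 1)"
      using i height_pos[of "Suc i"] p by (intro powr_mono2) auto
    moreover have "vol i powr e \<le> measure lborel (level_set f t) powr e"
      unfolding vol_def using i e t by (intro powr_mono2 measure_level_set_antimono) auto
    ultimately have "p * height (Suc i) powr (p - 1) * vol i powr e
        \<le> p * t powr (p - 1) * measure lborel (level_set f t) powr e"
      using p by (intro mult_mono) (auto simp: vol_nonneg)
    then show "ennreal (p * height (Suc i) powr (p - 1) * vol i powr e)
        \<le> indicator {0<..} t * ennreal (p * t powr (p - 1) * measure lborel (level_set f t) powr e)"
      using t by (simp add: ennreal_leI)
  qed simp
  finally show ?thesis .
qed

lemma height_powr_vol_eq_level_term:
  assumes "0 < e"
  shows "height i powr (p / e) * vol (Suc i) = lam powr (p / e) * level_term p e (Suc i) powr (1 / e)"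
proof -
  have "height i powr (p / e) = lam powr (p / e) * height (Suc i) powr (p / e)"
    using height_pos[of "Suc i"] lam_gt_1 by (simp add: height_Suc[of i] powr_mult)
  moreover have "level_term p e (Suc i) powr (1 / e) = height (Suc i) powr (p / e) * vol (Suc i)"
    using assms vol_nonneg[of "Suc i"] by (simp add: level_term_def powr_mult powr_powr)
  ultimately show ?thesis by (simp add: mult_ac)
qed

lemma nn_integral_powr_le_level_sum:
  assumes p: "1 \<le> p" and e: "0 < e" "e < 1"
  shows "(\<integral>\<^sup>+x. ennreal (\<bar>f x\<bar> powr (p / e)) \<partial>lborel)
    \<le> ennreal (lam powr (p / e) * suminf (level_term p e) powr (1 / e))"
proof -
  have sum: "summable (\<lambda>i. level_term p e (Suc i))"
    using summable_level_term[OF e] p by (simp add: summable_Suc_iff)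
  have "(\<integral>\<^sup>+x. ennreal (\<bar>f x\<bar> powr (p / e)) \<partial>lborel)
      \<le> (\<Sum>i. ennreal (height i powr (p / e)) * emeasure lborel (level_set f (height (Suc i))))"
  proof (rule nn_integral_le_suminf_emeasure)
    fix x
    assume "ennreal (\<bar>f x\<bar> powr (p / e)) \<noteq> 0"
    then have "0 < \<bar>f x\<bar>" by auto
    then obtain i where i: "height (Suc i) < \<bar>f x\<bar>" "\<bar>f x\<bar> \<le> height i"
      by (rule height_index[OF _ abs_le_T])
    then show "\<exists>i. x \<in> level_set f (height (Suc i)) \<and> ennreal (\<bar>f x\<bar> powr (p / e)) \<le> ennreal (height i powr (p / e))"
      using p e by (intro exI[of _ i] conjI ennreal_leI powr_mono2) (auto simp: level_set_def)
  qed simp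
  also have "\<dots> = ennreal (lam powr (p / e)) * (\<Sum>i. ennreal (level_term p e (Suc i) powr (1 / e)))"
    using e by (simp add: emeasure_level_set_height height_powr_vol_eq_level_term vol_nonneg
        flip: ennreal_mult ennreal_suminf_cmult)
  also have "\<dots> \<le> ennreal (lam powr (p / e)) * ennreal ((\<Sum>i. level_term p e (Suc i)) powr (1 / e))"
    using sum e by (intro mult_left_mono ennreal_suminf_powr_le) (auto simp: level_term_nonneg)
  also have "\<dots> \<le> ennreal (lam powr (p / e)) * ennreal (suminf (level_term p e) powr (1 / e))"
    using summable_level_term[OF e] p e
    by (intro mult_left_mono ennreal_leI powr_mono2 suminf_Suc_le suminf_nonneg sum)
      (auto simp: level_term_nonneg)
  finally show ?thesis by (simp add: ennreal_mult)
qed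

end

section \<open>Lower bound for the Besov integrand\<close>

lemma sets_union_dilations:
  fixes x :: "'a::euclidean_space"
  assumes "A \<in> sets borel"
  shows "(\<Union>j\<in>J. (\<lambda>h. x + real j *\<^sub>R h) -` A) \<in> sets borel"
proof -
  have "(\<lambda>h. x + real j *\<^sub>R h) -` A \<in> sets borel" for j
    using measurable_sets_borel[OF _ assms, of "\<lambda>h. x + real j *\<^sub>R h"] by simp
  then show ?thesis by auto
qed

lemma emeasure_union_dilations_le:
  fixes x :: "'a::euclidean_space"
  assumes "A \<in> sets borel"
  shows "emeasure lborel (\<Union>j\<in>{1..k}. (\<lambda>h. x + real j *\<^sub>R h) -` A) \<le> of_nat k * emeasure lborel A"
proof -
  have "emeasure lborel (\<Union>j\<in>{1..k}. (\<lambda>h. x + real j *\<^sub>R h) -` A)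
      \<le> (\<Sum>j\<in>{1..k}. emeasure lborel ((\<lambda>h. x + real j *\<^sub>R h) -` A))"
    using sets_union_dilations[OF assms, of x "{_}"] by (intro emeasure_subadditive_finite) auto
  also have "\<dots> \<le> (\<Sum>j\<in>{1..k}. emeasure lborel A)"
    using assms by (intro sum_mono emeasure_lborel_dilation_vimage_le) auto
  finally show ?thesis by simp
qed

lemma ennreal_le_of_twice_le_add:
  fixes E F :: ennreal
  assumes "ennreal (2 * v) \<le> E + F" "F \<le> ennreal v" "0 \<le> v"
  shows "ennreal v \<le> E"
proof -
  have "ennreal v + ennreal v \<le> E + F" using assms(1,3) by (simp flip: ennreal_plus)
  also have "\<dots> \<le> E + ennreal v" using assms(2) by (rule add_left_mono)
  finally show ?thesis using ennreal_add_left_cancel_le[of "ennreal v" "ennreal v" E] by (simp add: add.commute)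
qed

lemma emeasure_ball_diff_dilations_ge:
  fixes x :: "'a::euclidean_space"
  assumes A: "A \<in> sets borel" "emeasure lborel A = ennreal \<alpha>"
    and \<rho>: "0 < \<rho>" "unit_ball_vol (real DIM('a)) * \<rho> ^ DIM('a) = 2 * (real k * \<alpha>)"
  shows "ennreal (real k * \<alpha>) \<le> emeasure lborel (ball 0 \<rho> - (\<Union>j\<in>{1..k}. (\<lambda>h. x + real j *\<^sub>R h) -` A))"
proof -
  have "0 < unit_ball_vol (real DIM('a)) * \<rho> ^ DIM('a)" using \<rho>(1) by simp
  then have k\<alpha>: "0 < real k * \<alpha>" using \<rho>(2) by (simp add: mult.commute)
  define F where "F = (\<Union>j\<in>{1..k}. (\<lambda>h. x + real j *\<^sub>R h) -` A)"
  have F: "F \<in> sets borel" unfolding F_def by (rule sets_union_dilations[OF A(1)])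
  have "emeasure lborel (ball (0::'a) \<rho>) \<le> emeasure lborel (ball 0 \<rho> - F) + emeasure lborel F"
    by (rule order_trans[OF emeasure_mono emeasure_subadditive]) (use F in auto)
  then have "ennreal (2 * (real k * \<alpha>)) \<le> emeasure lborel (ball 0 \<rho> - F) + emeasure lborel F"
    using \<rho> by (simp add: emeasure_ball)
  moreover have "emeasure lborel F \<le> ennreal (real k * \<alpha>)"
    using emeasure_union_dilations_le[OF A(1), of x k] k\<alpha>
    by (simp add: F_def A(2) ennreal_of_nat_eq_real_of_nat zero_less_mult_iff flip: ennreal_mult)
  ultimately show ?thesis unfolding F_def by (rule ennreal_le_of_twice_le_add) (use k\<alpha> in simp)
qed

text \<open>Outside a set of directions of measure \<open>k \<alpha>\<close> every \<open>x + j h\<close>, \<open>1 \<le> j \<le> k\<close>, avoids \<open>A\<close>;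
  for those \<open>h\<close> only the term \<open>f x\<close> of \<open>\<Delta>\<^sup>k\<^sub>h f x\<close> is large.\<close>

lemma nn_integral_fdiff_ge:
  fixes f :: "'a::euclidean_space \<Rightarrow> real" and A :: "'a set"
  assumes A: "A \<in> sets borel" "emeasure lborel A = ennreal \<alpha>" and off_A: "\<And>y. y \<notin> A \<Longrightarrow> \<bar>f y\<bar> \<le> s'"
    and s: "s < \<bar>f x\<bar>" "2 ^ k * s' \<le> s / 2" "0 \<le> s'"
    and \<rho>: "0 < \<rho>" "unit_ball_vol (real DIM('a)) * \<rho> ^ DIM('a) = 2 * (real k * \<alpha>)"
    and p: "0 \<le> p" and w: "w \<le> 0"
  shows "ennreal ((s / 2) powr p * \<rho> powr w * (real k * \<alpha>))
    \<le> (\<integral>\<^sup>+h. ennreal (\<bar>fdiff k h f x\<bar> powr p) * ennreal (norm h powr w) \<partial>lborel)"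
proof -
  define F where "F = (\<Union>j\<in>{1..k}. (\<lambda>h. x + real j *\<^sub>R h) -` A)"
  have F [measurable]: "F \<in> sets borel" unfolding F_def by (rule sets_union_dilations[OF A(1)])
  have "0 < unit_ball_vol (real DIM('a)) * \<rho> ^ DIM('a)" using \<rho>(1) by simp
  then have k\<alpha>: "0 < real k * \<alpha>" using \<rho>(2) by (simp add: mult.commute)
  then have k: "1 \<le> k" by (cases k) auto
  have "s' \<le> 2 ^ k * s'" using mult_right_mono[OF one_le_power[of 2 k] s(3)] by simp
  then have s0: "0 \<le> s" and "x \<in> A" using off_A[of x] s by (cases "x \<in> A"; auto)+
  have pw: "(s / 2) powr p * \<rho> powr w \<le> \<bar>fdiff k h f x\<bar> powr p * norm h powr w"
    if h: "h \<in> ball 0 \<rho> - F" for h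
  proof -
    have "h \<noteq> 0" using h \<open>x \<in> A\<close> k by (auto simp: F_def)
    have "x + of_nat j *\<^sub>R h \<notin> A" if "1 \<le> j" "j \<le> k" for j
      using h that by (auto simp: F_def)
    then have "s / 2 \<le> \<bar>fdiff k h f x\<bar>" using off_A s by (intro fdiff_abs_ge_half) auto
    then have "(s / 2) powr p \<le> \<bar>fdiff k h f x\<bar> powr p"
      using s0 p by (intro powr_mono2) auto
    moreover have "\<rho> powr w \<le> norm h powr w"
      using \<open>h \<noteq> 0\<close> h w by (intro powr_mono2') auto
    ultimately show ?thesis by (intro mult_mono) auto
  qed
  have "ennreal (real k * \<alpha>) \<le> emeasure lborel (ball 0 \<rho> - F)"
    unfolding F_def by (rule emeasure_ball_diff_dilations_ge[OF A \<rho>])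
  then have "ennreal ((s / 2) powr p * \<rho> powr w) * ennreal (real k * \<alpha>)
      \<le> (\<integral>\<^sup>+h. ennreal ((s / 2) powr p * \<rho> powr w) * indicator (ball 0 \<rho> - F) h \<partial>lborel)"
    by (subst nn_integral_cmult_indicator) (auto intro: mult_left_mono)
  also have "\<dots> \<le> (\<integral>\<^sup>+h. ennreal (\<bar>fdiff k h f x\<bar> powr p) * ennreal (norm h powr w) \<partial>lborel)"
  proof (rule nn_integral_mono)
    fix h
    show "ennreal ((s / 2) powr p * \<rho> powr w) * indicator (ball 0 \<rho> - F) h
        \<le> ennreal (\<bar>fdiff k h f x\<bar> powr p) * ennreal (norm h powr w)"
      using pw[of h] by (cases "h \<in> ball 0 \<rho> - F") (auto intro: ennreal_leI simp flip: ennreal_mult')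
  qed
  finally show ?thesis using k\<alpha> by (simp add: ennreal_mult'')
qed

definition fdiff_lower_constant :: "real \<Rightarrow> nat \<Rightarrow> real \<Rightarrow> real \<Rightarrow> real" where
  "fdiff_lower_constant n k p \<gamma> = 2 powr (- p) * real k * (2 * real k / unit_ball_vol n) powr (- (1 + \<gamma>))"

lemma fdiff_lower_constant_pos:
  assumes "0 < n" "1 \<le> k"
  shows "0 < fdiff_lower_constant n k p \<gamma>"
proof -
  have "0 < unit_ball_vol n" using assms(1) by simp
  then show ?thesis using assms(2) unfolding fdiff_lower_constant_def by (intro mult_pos_pos) auto
qed

lemma fdiff_lower_constant_eq:
  assumes n: "0 < n" and k: "1 \<le> k" and \<alpha>: "0 < \<alpha>" and s: "0 \<le> s"
  defines "\<rho> \<equiv> (2 * real k * \<alpha> / unit_ball_vol n) powr (1 / n)"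
  shows "(s / 2) powr p * \<rho> powr (- (n + \<beta> * p)) * (real k * \<alpha>)
    = fdiff_lower_constant n k p (\<beta> * p / n) * s powr p * \<alpha> powr (- (\<beta> * p / n))"
proof -
  define \<gamma> where "\<gamma> = \<beta> * p / n"
  have "1 / n * (- (n + \<beta> * p)) = - (1 + \<gamma>)" using n by (simp add: \<gamma>_def field_simps)
  then have "\<rho> powr (- (n + \<beta> * p)) = ((2 * real k / unit_ball_vol n) * \<alpha>) powr (- (1 + \<gamma>))"
    by (simp add: \<rho>_def powr_powr)
  also have "\<dots> = (2 * real k / unit_ball_vol n) powr (- (1 + \<gamma>)) * \<alpha> powr (- (1 + \<gamma>))"
    by (rule powr_mult)
  finally have "\<rho> powr (- (n + \<beta> * p)) = (2 * real k / unit_ball_vol n) powr (- (1 + \<gamma>)) * \<alpha> powr (- (1 + \<gamma>))" .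
  moreover have "\<alpha> * \<alpha> powr (- (1 + \<gamma>)) = \<alpha> powr (- \<gamma>)"
    using \<alpha> by (simp add: powr_add[symmetric] powr_minus_divide[symmetric] powr_diff)
  moreover have "(s / 2) powr p = 2 powr (- p) * s powr p"
    using s by (simp add: powr_divide powr_minus_divide)
  ultimately show ?thesis by (simp add: fdiff_lower_constant_def \<gamma>_def algebra_simps)
qed

lemma suminf_ennreal_geometric_tail:
  fixes C r :: real
  assumes "0 \<le> C" "0 \<le> r" "r < 1"
  shows "(\<Sum>i. ennreal (if m \<le> i then C * r ^ i else 0)) = ennreal (C * r ^ m / (1 - r))"
proof (rule suminf_ennreal_eq)
  define g where "g i = (if m \<le> i then C * r ^ i else 0)" for i
  have "(\<lambda>i. C * r ^ m * r ^ i) sums (C * r ^ m * (1 / (1 - r)))"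
    using assms by (intro sums_mult geometric_sums) simp
  then have "(\<lambda>i. g (i + m)) sums (C * r ^ m / (1 - r))"
    by (simp add: g_def power_add mult_ac)
  then have "g sums (C * r ^ m / (1 - r) + (\<Sum>i<m. g i))"
    by (simp only: sums_iff_shift)
  then show "(\<lambda>i. if m \<le> i then C * r ^ i else 0) sums (C * r ^ m / (1 - r))"
    by (simp add: g_def[abs_def])
qed (use assms in simp)

lemma borel_measurable_besov_integrand:
  fixes f :: "'a::euclidean_space \<Rightarrow> real"
  assumes "continuous_on UNIV f"
  shows "(\<lambda>(x, h). ennreal (\<bar>fdiff k h f x\<bar> powr p) * ennreal (norm h powr w)) \<in> borel_measurable (lborel \<Otimes>\<^sub>M lborel)"
proof -
  have "continuous_on UNIV ((\<lambda>z. fdiff k (fst z) f (snd z)) \<circ> prod.swap)"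
    by (rule continuous_on_compose) (auto intro!: continuous_intros continuous_on_subset[OF continuous_on_fdiff[OF assms]])
  then have [measurable]: "(\<lambda>z::'a \<times> 'a. fdiff k (snd z) f (fst z)) \<in> borel_measurable borel"
    by (auto simp: o_def intro: borel_measurable_continuous_onI)
  have [measurable]: "(\<lambda>z::'a \<times> 'a. \<bar>fdiff k (snd z) f (fst z)\<bar> powr p) \<in> borel_measurable borel"
    by (rule measurable_abs_powr) measurable
  have [measurable]: "(\<lambda>z::'a \<times> 'a. norm (snd z) powr w) \<in> borel_measurable borel"
    by (intro powr_real_measurable borel_measurable_continuous_onI continuous_intros)
  have "(\<lambda>z::'a \<times> 'a. ennreal (\<bar>fdiff k (snd z) f (fst z)\<bar> powr p) * ennreal (norm (snd z) powr w))
      \<in> borel_measurable borel"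
    by measurable
  then show ?thesis by (simp add: lborel_prod case_prod_beta')
qed

lemma besov_integral_eq_iterated:
  fixes f :: "'a::euclidean_space \<Rightarrow> real"
  assumes "continuous_on UNIV f"
  shows "besov_integral k \<beta> p f = (\<integral>\<^sup>+x. \<integral>\<^sup>+h. ennreal (\<bar>fdiff k h f x\<bar> powr p)
      * ennreal (norm h powr (- (real DIM('a) + \<beta> * p))) \<partial>lborel \<partial>lborel)"
proof -
  let ?w = "- (real DIM('a) + \<beta> * p)"
  have [measurable]: "fdiff k h f \<in> borel_measurable borel" for h
    by (rule borel_measurable_fdiff[OF assms])
  have "besov_integral k \<beta> p f = (\<integral>\<^sup>+h. \<integral>\<^sup>+x. ennreal (\<bar>fdiff k h f x\<bar> powr p)
      * ennreal (norm h powr ?w) \<partial>lborel \<partial>lborel)"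
    unfolding besov_integral_def by (intro nn_integral_cong nn_integral_multc[symmetric]) measurable
  also have "\<dots> = (\<integral>\<^sup>+x. \<integral>\<^sup>+h. ennreal (\<bar>fdiff k h f x\<bar> powr p) * ennreal (norm h powr ?w) \<partial>lborel \<partial>lborel)"
    by (rule lborel_pair.Fubini'[OF borel_measurable_besov_integrand[OF assms]])
  finally show ?thesis .
qed

context geometric_levels
begin

lemma besov_integrand_ge:
  fixes k :: nat and \<beta> p :: real
  assumes lam: "2 ^ Suc k \<le> lam" and k: "1 \<le> k" and p: "0 \<le> p" and \<beta>: "0 \<le> \<beta>"
    and x: "height (Suc m) < \<bar>f x\<bar>"
  defines "n \<equiv> real DIM('a)"
  shows "ennreal (fdiff_lower_constant n k p (\<beta> * p / n) * height (Suc m) powr p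
              * vol (Suc (Suc m)) powr (- (\<beta> * p / n)))
    \<le> (\<integral>\<^sup>+h. ennreal (\<bar>fdiff k h f x\<bar> powr p) * ennreal (norm h powr (- (n + \<beta> * p))) \<partial>lborel)"
proof -
  define \<omega> \<alpha> s where "\<omega> = unit_ball_vol n" and "\<alpha> = vol (Suc (Suc m))" and "s = height (Suc m)"
  define \<rho> where "\<rho> = (2 * real k * \<alpha> / \<omega>) powr (1 / n)"
  have n: "0 < n" and \<omega>: "0 < \<omega>" by (simp_all add: n_def \<omega>_def)
  have s: "0 < s" by (simp add: s_def height_pos)
  have "x \<in> level_set f (height (Suc (Suc m)))"
    using x height_antimono[of "Suc m" "Suc (Suc m)"] by (auto simp: level_set_def)
  then have \<alpha>: "0 < \<alpha>" unfolding \<alpha>_def vol_def using height_pos by (intro measure_level_set_pos) (auto intro: less_imp_le)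
  have \<rho>: "0 < \<rho>" "\<omega> * \<rho> ^ DIM('a) = 2 * (real k * \<alpha>)"
    using k \<alpha> \<omega> n by (auto simp: \<rho>_def n_def powr_realpow[symmetric] powr_powr)
  have small: "2 ^ k * height (Suc (Suc m)) \<le> s / 2"
  proof -
    have "2 ^ k * height (Suc (Suc m)) * 2 ^ Suc k \<le> 2 ^ k * height (Suc (Suc m)) * lam"
      using lam height_pos[of "Suc (Suc m)"] by (intro mult_left_mono) auto
    then show ?thesis by (simp add: s_def height_Suc[of "Suc m"] mult_ac)
  qed
  have "ennreal ((s / 2) powr p * \<rho> powr (- (n + \<beta> * p)) * (real k * \<alpha>))
      \<le> (\<integral>\<^sup>+h. ennreal (\<bar>fdiff k h f x\<bar> powr p) * ennreal (norm h powr (- (n + \<beta> * p))) \<partial>lborel)"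
  proof (rule nn_integral_fdiff_ge[where A = "level_set f (height (Suc (Suc m)))" and s = s
        and s' = "height (Suc (Suc m))"])
    show "\<bar>f y\<bar> \<le> height (Suc (Suc m))" if "y \<notin> level_set f (height (Suc (Suc m)))" for y
      using that by (simp add: level_set_def)
    show "- (n + \<beta> * p) \<le> 0" using n mult_nonneg_nonneg[OF \<beta> p] by linarith
  qed (use x \<rho> p small height_pos[of "Suc (Suc m)"] emeasure_level_set_height[of "Suc (Suc m)"]
    in \<open>simp_all add: \<alpha>_def s_def \<omega>_def n_def\<close>)
  also have "(s / 2) powr p * \<rho> powr (- (n + \<beta> * p)) * (real k * \<alpha>)
      = fdiff_lower_constant n k p (\<beta> * p / n) * s powr p * \<alpha> powr (- (\<beta> * p / n))"
    unfolding \<rho>_def \<omega>_def using n k \<alpha> s by (intro fdiff_lower_constant_eq) auto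
  finally show ?thesis by (simp add: s_def \<alpha>_def)
qed

lemma level_weights_le_besov_integrand:
  fixes k :: nat and \<beta> p :: real
  assumes lam: "2 ^ Suc k \<le> lam" and k: "1 \<le> k" and p: "0 < p" and \<beta>: "0 \<le> \<beta>"
  defines "n \<equiv> real DIM('a)" and "\<gamma> \<equiv> \<beta> * p / real DIM('a)" and "r \<equiv> lam powr (- p)"
  shows "(\<Sum>i. ennreal (T powr p * r ^ Suc i * vol (Suc i) powr (- \<gamma>)) * indicator (level_set f (height i)) x)
    \<le> ennreal (r / ((1 - r) * fdiff_lower_constant n k p \<gamma>))
      * (\<integral>\<^sup>+h. ennreal (\<bar>fdiff k h f x\<bar> powr p) * ennreal (norm h powr (- (n + \<beta> * p))) \<partial>lborel)"
proof (cases "f x = 0")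
  case True
  then have "x \<notin> level_set f (height i)" for i using height_pos[of i] by (simp add: level_set_def)
  then show ?thesis by simp
next
  case False
  from False have "0 < \<bar>f x\<bar>" by simp
  then obtain m where m: "height (Suc m) < \<bar>f x\<bar>" "\<bar>f x\<bar> \<le> height m"
    by (rule height_index[OF _ abs_le_T])
  define \<kappa> \<alpha> where "\<kappa> = fdiff_lower_constant n k p \<gamma>" and "\<alpha> = vol (Suc (Suc m))"
  have r: "0 < r" "r < 1" using lam_gt_1 p by (auto simp: r_def intro: powr_less_one)
  have \<kappa>: "0 < \<kappa>" using k by (simp add: \<kappa>_def n_def fdiff_lower_constant_pos)
  have \<gamma>: "0 \<le> \<gamma>" using \<beta> p by (simp add: \<gamma>_def)
  have "x \<in> level_set f (height (Suc (Suc m)))"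
    using m height_antimono[of "Suc m" "Suc (Suc m)"] by (auto simp: level_set_def)
  from measure_level_set_pos[OF this] have \<alpha>: "0 < \<alpha>"
    using height_pos[of "Suc (Suc m)"] by (simp add: \<alpha>_def vol_def)
  have "ennreal (T powr p * r ^ Suc i * vol (Suc i) powr (- \<gamma>)) * indicator (level_set f (height i)) x
      \<le> ennreal (if Suc m \<le> i then \<alpha> powr (- \<gamma>) * T powr p * r * r ^ i else 0)" for i
  proof (cases "Suc m \<le> i")
    case True
    have "vol (Suc i) powr (- \<gamma>) \<le> \<alpha> powr (- \<gamma>)"
      unfolding \<alpha>_def using True \<alpha> \<gamma> by (intro powr_mono2' vol_mono) (auto simp: \<alpha>_def)
    then show ?thesis using True r by (auto simp: indicator_def mult_ac intro!: ennreal_leI mult_left_mono)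
  next
    case False
    then have "x \<notin> level_set f (height i)" using m height_antimono[of i m] by (auto simp: level_set_def)
    then show ?thesis by simp
  qed
  then have "(\<Sum>i. ennreal (T powr p * r ^ Suc i * vol (Suc i) powr (- \<gamma>)) * indicator (level_set f (height i)) x)
      \<le> ennreal (\<alpha> powr (- \<gamma>) * T powr p * r * r ^ Suc m / (1 - r))"
    using r by (subst suminf_ennreal_geometric_tail[symmetric]) (auto intro: suminf_le)
  also have "\<alpha> powr (- \<gamma>) * T powr p * r * r ^ Suc m / (1 - r)
      = r / ((1 - r) * \<kappa>) * (\<kappa> * height (Suc m) powr p * \<alpha> powr (- \<gamma>))"
    using \<kappa> r by (simp add: height_powr r_def field_simps)
  also have "ennreal \<dots> = ennreal (r / ((1 - r) * \<kappa>)) * ennreal (\<kappa> * height (Suc m) powr p * \<alpha> powr (- \<gamma>))"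
    using \<kappa> r by (intro ennreal_mult) auto
  also have "\<dots> \<le> ennreal (r / ((1 - r) * \<kappa>))
      * (\<integral>\<^sup>+h. ennreal (\<bar>fdiff k h f x\<bar> powr p) * ennreal (norm h powr (- (n + \<beta> * p))) \<partial>lborel)"
    using besov_integrand_ge[OF lam k _ \<beta> m(1)] p
    by (intro mult_left_mono) (auto simp: \<kappa>_def \<alpha>_def \<gamma>_def n_def)
  finally show ?thesis by (simp add: \<kappa>_def)
qed

lemma mixed_level_sum_le_besov_integral:
  fixes k :: nat and \<beta> p :: real
  assumes lam: "2 ^ Suc k \<le> lam" and k: "1 \<le> k" and p: "1 \<le> p" and \<beta>: "0 < \<beta>"
    and \<beta>p: "\<beta> * p < real DIM('a)"
  defines "\<gamma> \<equiv> \<beta> * p / real DIM('a)" and "r \<equiv> lam powr (- p)"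
  shows "ennreal (\<Sum>i. T powr p * r ^ Suc i * vol i * vol (Suc i) powr (- \<gamma>))
    \<le> ennreal (r / ((1 - r) * fdiff_lower_constant (real DIM('a)) k p \<gamma>)) * besov_integral k \<beta> p f"
proof -
  define u where "u i = T powr p * r ^ Suc i * vol i * vol (Suc i) powr (- \<gamma>)" for i
  define w where "w i = T powr p * r ^ Suc i * vol (Suc i) powr (- \<gamma>)" for i
  define K where "K = r / ((1 - r) * fdiff_lower_constant (real DIM('a)) k p \<gamma>)"
  define H where "H x = (\<integral>\<^sup>+h. ennreal (\<bar>fdiff k h f x\<bar> powr p)
    * ennreal (norm h powr (- (real DIM('a) + \<beta> * p))) \<partial>lborel)" for x
  have r: "0 < r" "r < 1" using lam_gt_1 p by (auto simp: r_def intro: powr_less_one)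
  have \<gamma>: "0 < \<gamma>" "\<gamma> < 1" using \<beta> p \<beta>p by (simp_all add: \<gamma>_def)
  have "summable u"
    unfolding u_def by (rule incseq_weighted_powr_suminf_le(2)[OF vol_nonneg vol_mono vol_le_support r \<gamma>]) auto
  moreover have "0 \<le> u i" for i using r by (simp add: u_def vol_nonneg)
  ultimately have "ennreal (suminf u) = (\<Sum>i. ennreal (u i))"
    by (intro suminf_ennreal2[symmetric])
  also have "\<dots> = (\<Sum>i. \<integral>\<^sup>+x. ennreal (w i) * indicator (level_set f (height i)) x \<partial>lborel)"
  proof (rule arg_cong[where f = suminf], rule ext)
    fix i
    have "u i = w i * vol i" by (simp add: u_def w_def mult_ac)
    then have "ennreal (u i) = ennreal (w i) * emeasure lborel (level_set f (height i))"
      by (simp add: ennreal_mult'' vol_nonneg emeasure_level_set_height)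
    then show "ennreal (u i) = (\<integral>\<^sup>+x. ennreal (w i) * indicator (level_set f (height i)) x \<partial>lborel)"
      by (subst nn_integral_cmult_indicator) simp_all
  qed
  also have "\<dots> = (\<integral>\<^sup>+x. (\<Sum>i. ennreal (w i) * indicator (level_set f (height i)) x) \<partial>lborel)"
    by (intro nn_integral_suminf[symmetric]) measurable
  also have "\<dots> \<le> (\<integral>\<^sup>+x. ennreal K * H x \<partial>lborel)"
    unfolding w_def K_def H_def \<gamma>_def r_def
    by (intro nn_integral_mono level_weights_le_besov_integrand[OF lam k]) (use p \<beta> in auto)
  also have "\<dots> = ennreal K * integral\<^sup>N lborel H"
    unfolding H_def
    by (intro nn_integral_cmult lborel.borel_measurable_nn_integral borel_measurable_besov_integrand continuous)
  also have "integral\<^sup>N lborel H = besov_integral k \<beta> p f"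
    unfolding H_def by (rule besov_integral_eq_iterated[OF continuous, symmetric])
  finally show ?thesis by (simp add: u_def K_def)
qed

lemma level_integral_le_besov_integral:
  fixes k :: nat and \<beta> p :: real
  assumes lam: "2 ^ Suc k \<le> lam" and k: "1 \<le> k" and p: "1 \<le> p" and \<beta>: "0 < \<beta>"
    and \<beta>p: "\<beta> * p < real DIM('a)"
  defines "\<gamma> \<equiv> \<beta> * p / real DIM('a)" and "r \<equiv> lam powr (- p)"
  defines "\<theta> \<equiv> (r / 2) powr (1 / (1 - \<gamma>))"
  shows "level_integral p (1 - \<gamma>) f
    \<le> ennreal (p * lam powr p * (2 / (r * \<theta>)) * (r / ((1 - r) * fdiff_lower_constant (real DIM('a)) k p \<gamma>)))
      * besov_integral k \<beta> p f"
proof -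
  define U where "U = (\<Sum>i. T powr p * r ^ Suc i * vol i * vol (Suc i) powr (- \<gamma>))"
  define Ku where "Ku = r / ((1 - r) * fdiff_lower_constant (real DIM('a)) k p \<gamma>)"
  have r: "0 < r" "r < 1" using lam_gt_1 p by (auto simp: r_def intro: powr_less_one)
  have \<gamma>: "0 < \<gamma>" "\<gamma> < 1" using \<beta> p \<beta>p by (simp_all add: \<gamma>_def)
  have \<theta>: "0 < \<theta>" using r by (simp add: \<theta>_def)
  have lt: "level_term p (1 - \<gamma>) = (\<lambda>i. T powr p * r ^ i * vol i powr (1 - \<gamma>))"
    by (simp add: fun_eq_iff level_term_def height_powr r_def)
  have X: "suminf (level_term p (1 - \<gamma>)) \<le> 2 / (r * \<theta>) * U"
    unfolding lt U_def \<theta>_def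
    by (rule incseq_weighted_powr_suminf_le(3)[OF vol_nonneg vol_mono vol_le_support r \<gamma>]) auto
  have "level_integral p (1 - \<gamma>) f \<le> ennreal (p * lam powr p * suminf (level_term p (1 - \<gamma>)))"
    using p \<gamma> by (intro level_integral_le_level_sum) auto
  also have "\<dots> \<le> ennreal (p * lam powr p * (2 / (r * \<theta>)) * U)"
    using mult_left_mono[OF X, of "p * lam powr p"] p by (intro ennreal_leI) (simp add: mult.assoc)
  also have "\<dots> = ennreal (p * lam powr p * (2 / (r * \<theta>))) * ennreal U"
    using p r \<theta> by (intro ennreal_mult') simp
  also have "\<dots> \<le> ennreal (p * lam powr p * (2 / (r * \<theta>))) * (ennreal Ku * besov_integral k \<beta> p f)"
    unfolding U_def Ku_def \<gamma>_def r_def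
    by (intro mult_left_mono mixed_level_sum_le_besov_integral lam k p \<beta> \<beta>p) simp
  also have "\<dots> = ennreal (p * lam powr p * (2 / (r * \<theta>)) * Ku) * besov_integral k \<beta> p f"
  proof -
    have "0 \<le> Ku" using r k by (simp add: Ku_def fdiff_lower_constant_pos less_imp_le)
    then show ?thesis by (subst ennreal_mult'') (simp_all add: mult.assoc)
  qed
  finally show ?thesis by (simp add: Ku_def)
qed

lemma lebesgue_norm_le_level_integral:
  assumes p: "1 \<le> p" and e: "0 < e" "e < 1"
  shows "enn2real (\<integral>\<^sup>+x. ennreal (\<bar>f x\<bar> powr (p / e)) \<partial>lborel) powr (e / p)
    \<le> lam * (p * (lam - 1) * lam powr (- p)) powr (- 1 / p) * enn2real (level_integral p e f) powr (1 / p)"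
proof -
  define X N c where "X = suminf (level_term p e)" and "N = enn2real (level_integral p e f)"
    and "c = p * (lam - 1) * lam powr (- p)"
  have c: "0 < c" using p lam_gt_1 by (simp add: c_def)
  have X: "0 \<le> X" using summable_level_term[OF e] p
    by (auto simp: X_def level_term_nonneg intro: suminf_nonneg)
  have "level_integral p e f < \<infinity>"
    using level_integral_le_level_sum[OF p e] by (simp add: le_less_trans)
  then have "c * X \<le> N"
    using level_sum_le_level_integral[OF p e] c X by (auto simp: N_def c_def X_def dest: enn2real_mono)
  then have XN: "X \<le> N / c" using c by (simp add: field_simps)
  have "enn2real (\<integral>\<^sup>+x. ennreal (\<bar>f x\<bar> powr (p / e)) \<partial>lborel) \<le> lam powr (p / e) * X powr (1 / e)"
    using enn2real_mono[OF nn_integral_powr_le_level_sum[OF p e]] by (simp add: X_def)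
  then have "enn2real (\<integral>\<^sup>+x. ennreal (\<bar>f x\<bar> powr (p / e)) \<partial>lborel) powr (e / p)
      \<le> (lam powr (p / e) * X powr (1 / e)) powr (e / p)"
    using p e by (intro powr_mono2) auto
  also have "\<dots> = lam * X powr (1 / p)"
    using lam_gt_1 p e X by (simp add: powr_mult powr_powr)
  also have "\<dots> \<le> lam * (N / c) powr (1 / p)"
    using XN X p lam_gt_1 by (intro mult_left_mono powr_mono2) auto
  also have "\<dots> = lam * c powr (- 1 / p) * N powr (1 / p)"
  proof -
    have "(N / c) powr (1 / p) = N powr (1 / p) / c powr (1 / p)"
      by (rule powr_divide)
    moreover have "c powr (- 1 / p) = inverse (c powr (1 / p))"
      using c by (simp add: powr_minus[symmetric])
    ultimately show ?thesis by (simp add: divide_inverse mult_ac)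
  qed
  finally show ?thesis by (simp add: N_def c_def)
qed

end

lemma C0_inf_imp_geometric_levels:
  fixes f :: "'a::euclidean_space \<Rightarrow> real"
  assumes "C0_inf f" "1 < lam"
  shows "\<exists>T. geometric_levels f T lam"
proof -
  obtain T where "0 < T" "\<And>x. \<bar>f x\<bar> \<le> T" using C0_inf_bounded[OF assms(1)] by blast
  with assms have "geometric_levels f T lam"
    by unfold_locales (auto simp: C0_inf_continuous C0_inf_def)
  then show ?thesis ..
qed

lemma C0_inf_lebesgue_norm_le_level_integral:
  fixes p e :: real
  assumes p: "1 \<le> p" and e: "0 < e" "e < 1"
  obtains C where "0 < C" and "\<And>f :: 'a::euclidean_space \<Rightarrow> real. C0_inf f \<Longrightarrow>
    enn2real (\<integral>\<^sup>+x. ennreal (\<bar>f x\<bar> powr (p / e)) \<partial>lborel) powr (e / p)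
      \<le> C * enn2real (level_integral p e f) powr (1 / p)"
proof
  show "0 < 2 * (p * (2 - 1) * 2 powr (- p)) powr (- 1 / p)" using p by simp
next
  fix f :: "'a \<Rightarrow> real"
  assume "C0_inf f"
  then obtain T where "geometric_levels f T 2" using C0_inf_imp_geometric_levels[of f 2] by auto
  then show "enn2real (\<integral>\<^sup>+x. ennreal (\<bar>f x\<bar> powr (p / e)) \<partial>lborel) powr (e / p)
      \<le> 2 * (p * (2 - 1) * 2 powr (- p)) powr (- 1 / p) * enn2real (level_integral p e f) powr (1 / p)"
    by (rule geometric_levels.lebesgue_norm_le_level_integral[OF _ p e])
qed

lemma C0_inf_level_integral_le_besov_norm:
  fixes \<beta> p :: real
  assumes \<beta>: "0 < \<beta>" and p: "1 \<le> p" and \<beta>p: "\<beta> * p < real DIM('a::euclidean_space)"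
  obtains C where "0 < C" and "\<And>f :: 'a \<Rightarrow> real. C0_inf f \<Longrightarrow>
    enn2real (level_integral p (1 - \<beta> * p / real DIM('a)) f) powr (1 / p) \<le> C * besov_norm \<beta> p f"
proof -
  define k where "k = nat (1 + \<lfloor>\<beta>\<rfloor>)"
  define lam :: real where "lam = 2 ^ Suc k"
  define \<gamma> r where "\<gamma> = \<beta> * p / real DIM('a)" and "r = lam powr (- p)"
  define \<theta> where "\<theta> = (r / 2) powr (1 / (1 - \<gamma>))"
  define K where "K = p * lam powr p * (2 / (r * \<theta>)) * (r / ((1 - r) * fdiff_lower_constant (real DIM('a)) k p \<gamma>))"
  have k: "1 \<le> k" "\<beta> < real k" using \<beta> by (simp_all add: k_def) linarith+
  have lam: "1 < lam" unfolding lam_def by (rule one_less_power) auto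
  have r: "0 < r" "r < 1" using lam p by (auto simp: r_def intro: powr_less_one)
  have \<theta>: "0 < \<theta>" using r by (simp add: \<theta>_def)
  have \<kappa>: "0 < fdiff_lower_constant (real DIM('a)) k p \<gamma>" using k by (simp add: fdiff_lower_constant_pos)
  have K: "0 < K" unfolding K_def using r p lam \<theta> \<kappa> by (intro mult_pos_pos divide_pos_pos) auto
  have "enn2real (level_integral p (1 - \<gamma>) f) powr (1 / p) \<le> K powr (1 / p) * besov_norm \<beta> p f"
    if f: "C0_inf f" for f :: "'a \<Rightarrow> real"
  proof -
    obtain T where "geometric_levels f T lam" using C0_inf_imp_geometric_levels[OF f lam] by blast
    then have "level_integral p (1 - \<gamma>) f \<le> ennreal K * besov_integral k \<beta> p f"
      unfolding K_def \<gamma>_def r_def \<theta>_def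
      by (rule geometric_levels.level_integral_le_besov_integral) (use k p \<beta> \<beta>p in \<open>simp_all add: lam_def\<close>)
    moreover have "besov_integral k \<beta> p f < \<infinity>"
      using besov_integral_finite[OF f \<beta> k(2)] p by simp
    ultimately have "enn2real (level_integral p (1 - \<gamma>) f) \<le> enn2real (ennreal K * besov_integral k \<beta> p f)"
      by (intro enn2real_mono) (auto simp: ennreal_mult_less_top)
    also have "\<dots> = K * enn2real (besov_integral k \<beta> p f)"
      using K by (simp add: enn2real_mult)
    finally have "enn2real (level_integral p (1 - \<gamma>) f) \<le> K * enn2real (besov_integral k \<beta> p f)" .
    then have "enn2real (level_integral p (1 - \<gamma>) f) powr (1 / p) \<le> (K * enn2real (besov_integral k \<beta> p f)) powr (1 / p)"
      using p by (intro powr_mono2) auto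
    then show ?thesis by (simp add: powr_mult besov_norm_eq k_def)
  qed
  then show ?thesis using K by (intro that[of "K powr (1 / p)"]) (simp_all add: \<gamma>_def)
qed

theorem corollary3p4:
  fixes \<beta> p :: real
  defines "n \<equiv> real DIM('a::euclidean_space)"
  assumes "0 < \<beta>" and "\<beta> < n" and "1 \<le> p" and "p < n / \<beta>"
  shows "\<exists>C1 C2. C1 > 0 \<and> C2 > 0 \<and> (\<forall>f :: 'a \<Rightarrow> real. C0_inf f \<longrightarrow>
     (enn2real (\<integral>\<^sup>+ x. ennreal (\<bar>f x\<bar> powr (n * p / (n - p * \<beta>))) \<partial>lborel)) powr ((n - p * \<beta>) / (n * p))
       \<le> C1 * (enn2real (\<integral>\<^sup>+ t. (indicator {0<..} t * ennreal (p * t powr (p - 1)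
              * measure lborel (level_set f t) powr ((n - p * \<beta>) / n))) \<partial>lborel)) powr (1 / p)
     \<and> (enn2real (\<integral>\<^sup>+ t. (indicator {0<..} t * ennreal (p * t powr (p - 1)
              * measure lborel (level_set f t) powr ((n - p * \<beta>) / n))) \<partial>lborel)) powr (1 / p)
       \<le> C2 * besov_norm \<beta> p f)"
proof -
  have n: "0 < n" by (simp add: n_def)
  have \<beta>p: "\<beta> * p < n" using assms(2,5) by (simp add: field_simps mult.commute)
  define e where "e = (n - p * \<beta>) / n"
  have e: "0 < e" "e < 1" "1 - \<beta> * p / real DIM('a) = e"
    using n \<beta>p assms(2,4) by (auto simp: e_def n_def[symmetric] field_simps)
  have q: "n * p / (n - p * \<beta>) = p / e" "(n - p * \<beta>) / (n * p) = e / p"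
    using n \<beta>p by (auto simp: e_def field_simps)
  obtain C1 where "0 < C1" and C1: "\<And>f :: 'a \<Rightarrow> real. C0_inf f \<Longrightarrow>
      enn2real (\<integral>\<^sup>+x. ennreal (\<bar>f x\<bar> powr (p / e)) \<partial>lborel) powr (e / p) \<le> C1 * enn2real (level_integral p e f) powr (1 / p)"
    using C0_inf_lebesgue_norm_le_level_integral[OF assms(4) e(1,2)] by blast
  obtain C2 where "0 < C2" and C2: "\<And>f :: 'a \<Rightarrow> real. C0_inf f \<Longrightarrow>
      enn2real (level_integral p (1 - \<beta> * p / real DIM('a)) f) powr (1 / p) \<le> C2 * besov_norm \<beta> p f"
    using C0_inf_level_integral_le_besov_norm[OF assms(2,4) \<beta>p[unfolded n_def]] by blast
  show ?thesis
    unfolding q e_def[symmetric] level_integral_def[symmetric]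
    using \<open>0 < C1\<close> \<open>0 < C2\<close> C1 C2[unfolded e(3)] by blast
qed

end
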